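(* There does not exist a quantum auxiliary-input commitment scheme that is simultaneously statistically hiding and statistically sum-binding.
   Context: A (non-interactive) quantum auxiliary-input commitment scheme consists of QPT algorithms $C$, $R$ and a family $\{\ket{\psi_\lambda}\}_{\lambda}$ of $\mathrm{poly}(\lambda)$-qubit states (not necessarily efficiently generatable); one copy of $\ket{\psi_\lambda}$ is given to each of $C$ and $R$. Commit: $C$ on input $b\in\{0,1\}$ generates a state on registers $\mathbf{C},\mathbf{R}$ and sends $\mathbf{C}$. Reveal: $C$ sends $b$ and $\mathbf{R}$; $R$ outputs $b$ (accept) or $\bot$. Correctness: honest runs accept with probability 1. Statistical hiding: for every non-uniform unbounded-time algorithm $\{\mathcal{A}_\lambda,\rho_\lambda\}$ (with polynomial-size quantum advice $\rho_\lambda$), the advantage of distinguishing $\mathrm{Tr}_{\mathbf{R}}\sigma^{(0)}$ from $\mathrm{Tr}_{\mathbf{R}}\sigma^{(1)}$ is $\mathsf{negl}(\lambda)$, where $\sigma^{(b)}$ is the honest commit state for $b$. Statistical sum-binding: for any pair of non-uniform unbounded-time malicious committers $C_0^*,C_1^*$ taking $\ket{\psi_\lambda}$ as input and acting identically in the commit phase, with $p_b$ the probability that $R$ accepts revealed bit $b$ from $C_b^*$, $p_0+p_1\le1+\mathsf{negl}(\lambda)$. *)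

theory Defs
  imports "Jordan_Normal_Form.Matrix" Complex_Main
begin

text \<open>A system of n qubits has Hilbert space C^(2^n).
  Composite systems use the Kronecker product with the first factor as most significant
  index (register order as written, e.g. C (x) R).\<close>

definition adj :: "complex mat \<Rightarrow> complex mat" where
  "adj A = mat (dim_col A) (dim_row A) (\<lambda>(i,j). cnj (A $$ (j,i)))"

definition tr :: "complex mat \<Rightarrow> complex" where
  "tr A = (\<Sum>i<dim_row A. A $$ (i,i))"

definition kron :: "complex mat \<Rightarrow> complex mat \<Rightarrow> complex mat" where
  "kron A B = mat (dim_row A * dim_row B) (dim_col A * dim_col B)
     (\<lambda>(i,j). A $$ (i div dim_row B, j div dim_col B) * B $$ (i mod dim_row B, j mod dim_col B))"

definition ptrace2 :: "nat \<Rightarrow> nat \<Rightarrow> complex mat \<Rightarrow> complex mat" where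
  "ptrace2 dA dB A = mat dA dA (\<lambda>(i,j). \<Sum>k<dB. A $$ (i*dB + k, j*dB + k))"

definition psd :: "nat \<Rightarrow> complex mat \<Rightarrow> bool" where
  "psd n A \<longleftrightarrow> A \<in> carrier_mat n n \<and>
     (\<forall>v \<in> carrier_vec n. (\<Sum>i<n. \<Sum>j<n. cnj (v $ i) * A $$ (i,j) * v $ j) \<in> \<real> \<and>
                           0 \<le> Re (\<Sum>i<n. \<Sum>j<n. cnj (v $ i) * A $$ (i,j) * v $ j))"

definition density :: "nat \<Rightarrow> complex mat \<Rightarrow> bool" where
  "density n \<rho> \<longleftrightarrow> psd n \<rho> \<and> tr \<rho> = 1"

text \<open>Two-outcome measurement: the POVM element E of the outcome "accept"/"1", 0 <= E <= I.\<close>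
definition povm_elem :: "nat \<Rightarrow> complex mat \<Rightarrow> bool" where
  "povm_elem n E \<longleftrightarrow> psd n E \<and> psd n (1\<^sub>m n - E)"

definition prob :: "complex mat \<Rightarrow> complex mat \<Rightarrow> real" where
  "prob E \<rho> = Re (tr (E * \<rho>))"

definition unit_state :: "nat \<Rightarrow> complex vec \<Rightarrow> bool" where
  "unit_state n v \<longleftrightarrow> v \<in> carrier_vec n \<and> (\<Sum>i<n. cmod (v $ i) ^ 2) = 1"

definition proj :: "complex vec \<Rightarrow> complex mat" where
  "proj v = mat (dim_vec v) (dim_vec v) (\<lambda>(i,j). v $ i * cnj (v $ j))"

text \<open>Quantum channels (CPTP maps) from C^din to C^dout given by Kraus operators.
  Every quantum operation (in particular every quantum algorithm, with its workspace
  discarded) is of this form.\<close>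
definition kraus :: "nat \<Rightarrow> nat \<Rightarrow> complex mat list \<Rightarrow> bool" where
  "kraus din dout Ks \<longleftrightarrow> (\<forall>K \<in> set Ks. K \<in> carrier_mat dout din) \<and>
     foldr (\<lambda>K acc. adj K * K + acc) Ks (0\<^sub>m din din) = 1\<^sub>m din"

definition apply_ch :: "nat \<Rightarrow> complex mat list \<Rightarrow> complex mat \<Rightarrow> complex mat" where
  "apply_ch dout Ks \<rho> = foldr (\<lambda>K acc. K * \<rho> * adj K + acc) Ks (0\<^sub>m dout dout)"

definition on_second :: "nat \<Rightarrow> complex mat list \<Rightarrow> complex mat list" where
  "on_second d Ks = map (kron (1\<^sub>m d)) Ks"

definition negl :: "(nat \<Rightarrow> real) \<Rightarrow> bool" where
  "negl f \<longleftrightarrow> (\<forall>c::nat. eventually (\<lambda>n. \<bar>f n\<bar> \<le> 1 / real n ^ c) sequentially)"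

definition polybounded :: "(nat \<Rightarrow> nat) \<Rightarrow> bool" where
  "polybounded f \<longleftrightarrow> (\<exists>k. \<forall>n. f n \<le> k * (n + 1) ^ k)"

text \<open>A scheme for security parameter n (lambda) is given by
  \<^item> qubit counts nA (auxiliary state), nC (commitment register C), nR (reveal register R),
    all polynomially bounded;
  \<^item> aux n: the auxiliary state |psi_n> (unit vector on nA n qubits), not necessarily
    efficiently generatable; one copy each goes to C and R;
  \<^item> Com b n: the honest commit operation of C on input b: a channel from its copy of
    |psi_n> to registers C (x) R;
  \<^item> Acc b n: the receiver's accepting POVM element when the revealed bit is b, acting on
    C (x) R (x) (receiver's copy of |psi_n>); the receiver outputs b on acceptance, bot otherwise.\<close>

definition honest_state ::
  "(nat \<Rightarrow> nat) \<Rightarrow> (nat \<Rightarrow> nat) \<Rightarrow> (nat \<Rightarrow> complex vec) \<Rightarrow> (bool \<Rightarrow> nat \<Rightarrow> complex mat list)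
    \<Rightarrow> bool \<Rightarrow> nat \<Rightarrow> complex mat" where
  "honest_state nC nR aux Com b n = apply_ch (2 ^ nC n * 2 ^ nR n) (Com b n) (proj (aux n))"

definition qaux_commitment ::
  "(nat \<Rightarrow> nat) \<Rightarrow> (nat \<Rightarrow> nat) \<Rightarrow> (nat \<Rightarrow> nat) \<Rightarrow> (nat \<Rightarrow> complex vec)
    \<Rightarrow> (bool \<Rightarrow> nat \<Rightarrow> complex mat list) \<Rightarrow> (bool \<Rightarrow> nat \<Rightarrow> complex mat) \<Rightarrow> bool" where
  "qaux_commitment nA nC nR aux Com Acc \<longleftrightarrow>
     polybounded nA \<and> polybounded nC \<and> polybounded nR \<and>
     (\<forall>n. unit_state (2 ^ nA n) (aux n)) \<and>
     (\<forall>b n. kraus (2 ^ nA n) (2 ^ nC n * 2 ^ nR n) (Com b n)) \<and>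
     (\<forall>b n. povm_elem (2 ^ nC n * 2 ^ nR n * 2 ^ nA n) (Acc b n)) \<and>
     \<comment> \<open>correctness: honest runs accept with probability 1\<close>
     (\<forall>b n. prob (Acc b n) (kron (honest_state nC nR aux Com b n) (proj (aux n))) = 1)"

text \<open>Statistical hiding: every non-uniform unbounded distinguisher with polynomial-size
  quantum advice rho_n (on nadv n qubits) acting on rho_n (x) Tr_R sigma^(b), and outputting 1
  with POVM element D n, has negligible advantage.\<close>
definition stat_hiding ::
  "(nat \<Rightarrow> nat) \<Rightarrow> (nat \<Rightarrow> nat) \<Rightarrow> (nat \<Rightarrow> nat) \<Rightarrow> (nat \<Rightarrow> complex vec)
    \<Rightarrow> (bool \<Rightarrow> nat \<Rightarrow> complex mat list) \<Rightarrow> bool" where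
  "stat_hiding nA nC nR aux Com \<longleftrightarrow>
     (\<forall>(nadv :: nat \<Rightarrow> nat) (\<rho> :: nat \<Rightarrow> complex mat) (D :: nat \<Rightarrow> complex mat).
        polybounded nadv \<longrightarrow>
        (\<forall>n. density (2 ^ nadv n) (\<rho> n)) \<longrightarrow>
        (\<forall>n. povm_elem (2 ^ nadv n * 2 ^ nC n) (D n)) \<longrightarrow>
        negl (\<lambda>n. prob (D n) (kron (\<rho> n) (ptrace2 (2 ^ nC n) (2 ^ nR n) (honest_state nC nR aux Com False n)))
                - prob (D n) (kron (\<rho> n) (ptrace2 (2 ^ nC n) (2 ^ nR n) (honest_state nC nR aux Com True n)))))"

text \<open>Statistical sum-binding: for malicious committers C_0^*, C_1^* that act identically in the
  commit phase (a channel MCom n from |psi_n> to C (x) S, with S a private register of arbitrary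
  finite dimension dS n) and whose reveal phases are channels MRev b n from S to R, the
  receiver's acceptance probabilities p_b satisfy p_0 + p_1 <= 1 + negl.\<close>
definition mal_state ::
  "(nat \<Rightarrow> nat) \<Rightarrow> (nat \<Rightarrow> nat) \<Rightarrow> (nat \<Rightarrow> complex vec) \<Rightarrow> (nat \<Rightarrow> nat)
    \<Rightarrow> (nat \<Rightarrow> complex mat list) \<Rightarrow> (bool \<Rightarrow> nat \<Rightarrow> complex mat list) \<Rightarrow> bool \<Rightarrow> nat \<Rightarrow> complex mat" where
  "mal_state nC nR aux dS MCom MRev b n =
     apply_ch (2 ^ nC n * 2 ^ nR n) (on_second (2 ^ nC n) (MRev b n))
       (apply_ch (2 ^ nC n * dS n) (MCom n) (proj (aux n)))"

definition stat_sum_binding ::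
  "(nat \<Rightarrow> nat) \<Rightarrow> (nat \<Rightarrow> nat) \<Rightarrow> (nat \<Rightarrow> nat) \<Rightarrow> (nat \<Rightarrow> complex vec)
    \<Rightarrow> (bool \<Rightarrow> nat \<Rightarrow> complex mat) \<Rightarrow> bool" where
  "stat_sum_binding nA nC nR aux Acc \<longleftrightarrow>
     (\<forall>(dS :: nat \<Rightarrow> nat) (MCom :: nat \<Rightarrow> complex mat list) (MRev :: bool \<Rightarrow> nat \<Rightarrow> complex mat list).
        (\<forall>n. 0 < dS n) \<longrightarrow>
        (\<forall>n. kraus (2 ^ nA n) (2 ^ nC n * dS n) (MCom n)) \<longrightarrow>
        (\<forall>b n. kraus (dS n) (2 ^ nR n) (MRev b n)) \<longrightarrow>
        (\<exists>\<epsilon>. negl \<epsilon> \<and>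
          (\<forall>n. prob (Acc False n) (kron (mal_state nC nR aux dS MCom MRev False n) (proj (aux n)))
              + prob (Acc True n) (kron (mal_state nC nR aux dS MCom MRev True n) (proj (aux n)))
              \<le> 1 + \<epsilon> n)))"

end

theory Submission
  imports Defs "Jordan_Normal_Form.Char_Poly"
begin

text \<open>Let \<open>\<sigma>\<^sub>b\<close> be the honest commitment to \<open>b\<close>. Purifying the commit channel, a malicious committer
  can hold a purification of \<open>\<sigma>\<^sub>0\<close> on a private register \<open>S\<close>. Statistical hiding makes the receiver's
  views \<open>Tr\<^sub>R \<sigma>\<^sub>0\<close> and \<open>Tr\<^sub>R \<sigma>\<^sub>1\<close> close in trace distance \<open>\<delta>\<close>, so by Uhlmann's theorem and the
  Fuchs--van de Graaf inequality some contraction \<open>V\<close> on \<open>S\<close> turns this purification into a state whose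
  overlap with a purification of \<open>\<sigma>\<^sub>1\<close> is at least \<open>1 - \<delta>\<close>. Revealing \<open>0\<close> honestly is accepted with
  certainty; applying \<open>V\<close> and revealing \<open>1\<close> is accepted with probability at least \<open>(1 - \<delta>)\<^sup>2\<close>, because
  the receiver accepts the honest \<open>\<sigma>\<^sub>1\<close> with certainty. As \<open>\<delta>\<close> is negligible, \<open>p\<^sub>0 + p\<^sub>1\<close> tends to \<open>2\<close>,
  contradicting sum-binding.\<close>

section \<open>Adjoint and trace\<close>

lemma adj_dims[simp]: "dim_row (adj A) = dim_col A" "dim_col (adj A) = dim_row A"
  by (simp_all add: adj_def)

lemma adj_index[simp]: "i < dim_col A \<Longrightarrow> j < dim_row A \<Longrightarrow> adj A $$ (i,j) = cnj (A $$ (j,i))"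
  unfolding adj_def by (rule index_mat(1)[THEN trans], simp_all)

lemma adj_carrier[simp,intro]: "A \<in> carrier_mat n m \<Longrightarrow> adj A \<in> carrier_mat m n"
  by (metis adj_dims carrier_matD carrier_matI)

lemma adj_adj[simp]: "adj (adj A) = A"
  by (rule eq_matI) auto

lemma adj_one[simp]: "adj (1\<^sub>m n) = 1\<^sub>m n"
  by (rule eq_matI) auto

lemma adj_minus: "A \<in> carrier_mat n m \<Longrightarrow> B \<in> carrier_mat n m \<Longrightarrow> adj (A - B) = adj A - adj B"
  by (rule eq_matI) auto

lemma adj_mult: "dim_col A = dim_row B \<Longrightarrow> adj (A * B) = adj B * adj A"
  by (rule eq_matI) (auto simp: scalar_prod_def mult.commute)

lemma assoc_mult_mat': "dim_col A = dim_row B \<Longrightarrow> dim_col B = dim_row C \<Longrightarrow> A * B * C = A * (B * C)"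
  by (rule assoc_mult_mat[of A "dim_row A" "dim_col A" B "dim_col B" C "dim_col C"]) auto

lemma mult_add_distrib_mat': "dim_col A = dim_row B \<Longrightarrow> dim_row B = dim_row C \<Longrightarrow> dim_col B = dim_col C \<Longrightarrow>
   A * (B + C) = A * B + A * C"
  by (rule mult_add_distrib_mat[of A "dim_row A" "dim_col A" B "dim_col B"]) auto

lemma mult_minus_distrib_mat': "dim_col A = dim_row B \<Longrightarrow> dim_row B = dim_row C \<Longrightarrow> dim_col B = dim_col C \<Longrightarrow>
   A * (B - C) = A * B - (A * C :: complex mat)"
  by (rule mult_minus_distrib_mat[of A "dim_row A" "dim_col A" B "dim_col B"]) auto

lemma minus_mult_distrib_mat': "dim_row A = dim_row B \<Longrightarrow> dim_col A = dim_col B \<Longrightarrow> dim_col A = dim_row C \<Longrightarrow>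
   (A - B) * C = A * C - (B * C :: complex mat)"
  by (rule minus_mult_distrib_mat[of A "dim_row A" "dim_col A" B C "dim_col C"]) auto

lemma tr_mult: "A \<in> carrier_mat n m \<Longrightarrow> B \<in> carrier_mat m n \<Longrightarrow> tr (A * B) = (\<Sum>i<n. \<Sum>j<m. A $$ (i,j) * B $$ (j,i))"
  unfolding tr_def by (simp add: scalar_prod_def atLeast0LessThan)

lemma tr_mult_comm: "A \<in> carrier_mat n m \<Longrightarrow> B \<in> carrier_mat m n \<Longrightarrow> tr (A * B) = tr (B * A)"
  by (simp add: tr_mult sum.swap[of _ "{..<m}"] mult.commute)

lemma tr_add: "dim_row B = dim_row A \<Longrightarrow> dim_col A = dim_row A \<Longrightarrow> dim_col B = dim_row A \<Longrightarrow>
   tr (A + B) = tr A + tr B"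
  unfolding tr_def by (simp add: sum.distrib)

lemma tr_minus: "dim_row B = dim_row A \<Longrightarrow> dim_col A = dim_row A \<Longrightarrow> dim_col B = dim_row A \<Longrightarrow>
   tr (A - B) = tr A - tr B"
  unfolding tr_def by (simp add: sum_subtractf)

lemma mat_diag_dims[simp]: "dim_row (mat_diag n f) = n" "dim_col (mat_diag n f) = n"
  by (simp_all add: mat_diag_def)

lemma cnj_mult_self: "cnj z * z = complex_of_real (cmod z ^ 2)"
  by (simp only: complex_norm_square mult.commute)

section \<open>Spectral theorem for Hermitian matrices\<close>

definition unitary :: "nat \<Rightarrow> complex mat \<Rightarrow> bool" where
  "unitary n U \<longleftrightarrow> U \<in> carrier_mat n n \<and> adj U * U = 1\<^sub>m n \<and> U * adj U = 1\<^sub>m n"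

lemma unitary_carrier: "unitary n U \<Longrightarrow> U \<in> carrier_mat n n"
  by (simp add: unitary_def)

lemma unit_eigenvector_exists:
  assumes A: "A \<in> carrier_mat (Suc n) (Suc n)"
  shows "\<exists>e u r. u \<in> carrier_vec (Suc n) \<and> (\<Sum>i<Suc n. cmod (u $ i) ^ 2) = 1 \<and>
    u $ 0 = complex_of_real r \<and> 0 \<le> r \<and> A *\<^sub>v u = e \<cdot>\<^sub>v u"
proof -
  obtain as where cp: "char_poly A = (\<Prod>a \<leftarrow> as. [:- a, 1:])" and len: "length as = Suc n"
    using char_poly_factorized[OF A] by blast
  then obtain e rest where "as = e # rest" by (cases as) auto
  hence "poly (char_poly A) e = 0" unfolding cp by simp
  hence "eigenvalue A e" using eigenvalue_root_char_poly[OF A] by simp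
  then obtain v where v: "v \<in> carrier_vec (Suc n)" "v \<noteq> 0\<^sub>v (Suc n)" and ev: "A *\<^sub>v v = e \<cdot>\<^sub>v v"
    unfolding eigenvalue_def eigenvector_def using A by auto
  define s where "s = (\<Sum>i<Suc n. cmod (v $ i) ^ 2)"
  have s0: "s > 0"
  proof -
    obtain i where i: "i < Suc n" "v $ i \<noteq> 0" using v by (metis eq_vecI carrier_vecD index_zero_vec dim_vec)
    hence "0 < cmod (v $ i) ^ 2" by simp
    also have "\<dots> \<le> s" unfolding s_def using i by (intro member_le_sum) auto
    finally show ?thesis .
  qed
  \<comment> \<open>normalise, and rotate the phase so that the first entry is real and nonnegative\<close>
  define \<theta> where "\<theta> = (if v $ 0 = 0 then 1 else cnj (v $ 0) / complex_of_real (cmod (v $ 0)))"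
  have th1: "cmod \<theta> = 1" unfolding \<theta>_def by (simp add: norm_divide)
  have th0: "\<theta> * v $ 0 = complex_of_real (cmod (v $ 0))"
  proof (cases "v $ 0 = 0")
    case False
    have "cnj (v $ 0) * v $ 0 = complex_of_real (cmod (v $ 0)) * complex_of_real (cmod (v $ 0))"
      by (simp only: cnj_mult_self of_real_mult[symmetric] power2_eq_square)
    thus ?thesis using False unfolding \<theta>_def by (simp add: field_simps)
  qed (simp add: \<theta>_def)
  define u where "u = (\<theta> / complex_of_real (sqrt s)) \<cdot>\<^sub>v v"
  have "(\<Sum>i<Suc n. cmod (u $ i) ^ 2) = (\<Sum>i<Suc n. cmod (v $ i) ^ 2 / s)"
    using v s0 unfolding u_def by (intro sum.cong) (auto simp: norm_mult norm_divide th1 power_divide)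
  also have "\<dots> = 1" using s0 by (simp add: s_def sum_divide_distrib[symmetric])
  finally have "(\<Sum>i<Suc n. cmod (u $ i) ^ 2) = 1" .
  moreover have "u $ 0 = complex_of_real (cmod (v $ 0) / sqrt s)"
    using v th0 unfolding u_def by (simp add: mult.commute)
  moreover have "A *\<^sub>v u = e \<cdot>\<^sub>v u"
    unfolding u_def using A v ev by (simp add: mult_mat_vec smult_smult_assoc mult.commute)
  moreover have "u \<in> carrier_vec (Suc n)" using v unfolding u_def by simp
  ultimately show ?thesis using s0 by (intro exI[of _ e] exI[of _ u] exI[of _ "cmod (v $ 0) / sqrt s"]) auto
qed

lemma householder_involution:
  fixes w :: "nat \<Rightarrow> complex" and c :: real
  assumes c: "c * c * (\<Sum>k<N. cmod (w k) ^ 2) = 2 * c"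
  defines "H \<equiv> mat N N (\<lambda>(i,j). (if i = j then 1 else 0) - complex_of_real c * w i * cnj (w j))"
  shows "adj H = H" "H * H = 1\<^sub>m N"
proof -
  show "adj H = H" unfolding H_def by (rule eq_matI) (auto simp: mult.commute)
  have Sw: "(\<Sum>k<N. cnj (w k) * w k) = complex_of_real (\<Sum>k<N. cmod (w k) ^ 2)"
    by (simp add: cnj_mult_self)
  show "H * H = 1\<^sub>m N"
  proof (rule eq_matI)
    fix i j assume "i < dim_row (1\<^sub>m N)" "j < dim_col (1\<^sub>m N)"
    hence i: "i < N" and j: "j < N" by auto
    let ?\<delta> = "\<lambda>i j. if i = j then 1 else (0::complex)"
    have d1: "(\<Sum>k<N. ?\<delta> i k * X k) = X i" for X :: "nat \<Rightarrow> complex"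
      using i by (simp add: if_distrib[where f="\<lambda>a. a * _"] cong: if_cong)
    have d2: "(\<Sum>k<N. X k * ?\<delta> k j) = X j" for X :: "nat \<Rightarrow> complex"
      using j by (simp add: if_distrib[where f="\<lambda>a. _ * a"] cong: if_cong)
    have "(H * H) $$ (i,j) = (\<Sum>k<N. (?\<delta> i k - complex_of_real c * w i * cnj (w k)) *
          (?\<delta> k j - complex_of_real c * w k * cnj (w j)))"
      using i j unfolding H_def by (simp add: scalar_prod_def atLeast0LessThan)
    also have "\<dots> = (\<Sum>k<N. ?\<delta> i k * ?\<delta> k j)
        - (\<Sum>k<N. ?\<delta> i k * (complex_of_real c * w k * cnj (w j)))
        - (\<Sum>k<N. (complex_of_real c * w i * cnj (w k)) * ?\<delta> k j)
        + (complex_of_real c * complex_of_real c * w i * cnj (w j)) * (\<Sum>k<N. cnj (w k) * w k)"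
      by (simp add: algebra_simps sum_subtractf sum.distrib sum_distrib_left)
    also have "\<dots> = ?\<delta> i j - 2 * complex_of_real c * w i * cnj (w j)
        + complex_of_real (c * c * (\<Sum>k<N. cmod (w k) ^ 2)) * w i * cnj (w j)"
      unfolding d1 d2 Sw by (simp add: algebra_simps)
    also have "\<dots> = ?\<delta> i j" unfolding c by (simp add: algebra_simps)
    finally show "(H * H) $$ (i,j) = 1\<^sub>m N $$ (i,j)" using i j by simp
  qed (auto simp: H_def)
qed

text \<open>The reflection in the hyperplane orthogonal to \<open>e\<^sub>0 - u\<close> swaps \<open>e\<^sub>0\<close> and \<open>u\<close>; this needs
  \<open>\<langle>e\<^sub>0, u\<rangle>\<close> to be real.\<close>

lemma householder_reflection:
  fixes u :: "complex vec"
  assumes u: "u \<in> carrier_vec (Suc n)" and unit: "(\<Sum>i<Suc n. cmod (u $ i) ^ 2) = 1"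
    and u0: "u $ 0 = complex_of_real r" and r: "0 \<le> r"
  shows "\<exists>H. H \<in> carrier_mat (Suc n) (Suc n) \<and> adj H = H \<and> H * H = 1\<^sub>m (Suc n) \<and>
    (\<forall>i < Suc n. H $$ (i,0) = u $ i)"
proof -
  define w where "w = (\<lambda>i. (if i = 0 then 1 else 0) - u $ i)"
  define S where "S = (\<Sum>i<Suc n. cmod (w i) ^ 2)"
  define c :: real where "c = (if S = 0 then 0 else 2 / S)"
  define H where "H = mat (Suc n) (Suc n) (\<lambda>(i,j). (if i = j then 1 else 0) - complex_of_real c * w i * cnj (w j))"
  have cS: "c * c * S = 2 * c" unfolding c_def by auto
  have w0: "w 0 = complex_of_real (1 - r)" unfolding w_def u0 by simp
  have rest: "(\<Sum>i<n. cmod (u $ Suc i) ^ 2) = 1 - r^2"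
    using unit unfolding sum.lessThan_Suc_shift u0 by simp
  have "S = (1 - r)^2 + (\<Sum>i<n. cmod (u $ Suc i) ^ 2)"
    unfolding S_def sum.lessThan_Suc_shift w0 norm_of_real by (simp add: w_def)
  hence S: "S = 2 - 2 * r" unfolding rest by (simp add: power2_eq_square algebra_simps)
  have col0: "H $$ (i,0) = u $ i" if i: "i < Suc n" for i
  proof (cases "S = 0")
    case True
    hence "r = 1" using S by simp
    hence "(\<Sum>i<n. cmod (u $ Suc i) ^ 2) = 0" using rest by simp
    hence "\<forall>k<n. u $ Suc k = 0" by (subst (asm) sum_nonneg_eq_0_iff) auto
    hence "u $ i = (if i = 0 then 1 else 0)" using u0 \<open>r = 1\<close> i by (cases i) auto
    thus ?thesis using i True unfolding H_def c_def by simp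
  next
    case False
    hence "(2 / (2 - 2 * r)) * (1 - r) = 1" using S by (simp add: field_simps)
    hence "complex_of_real (2 / (2 - 2 * r)) * complex_of_real (1 - r) = 1"
      by (metis of_real_1 of_real_mult)
    hence "complex_of_real (2 / (2 - 2 * r)) * w i * complex_of_real (1 - r) = w i"
      by (metis mult.commute mult.left_commute mult.right_neutral)
    moreover have "H $$ (i,0) = (if i = 0 then 1 else 0) - complex_of_real (2 / (2 - 2 * r)) * w i * complex_of_real (1 - r)"
      using i False unfolding H_def c_def S by (simp add: w0)
    ultimately show ?thesis unfolding w_def by simp
  qed
  have "adj H = H" "H * H = 1\<^sub>m (Suc n)"
    using householder_involution[of c w "Suc n"] cS unfolding S_def H_def by simp_all
  moreover have "H \<in> carrier_mat (Suc n) (Suc n)" by (simp add: H_def)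
  ultimately show ?thesis using col0 by blast
qed

definition block_diag1 :: "nat \<Rightarrow> complex \<Rightarrow> complex mat \<Rightarrow> complex mat" where
  "block_diag1 n x M = mat (Suc n) (Suc n)
     (\<lambda>(i,j). if i = 0 \<and> j = 0 then x else if i = 0 \<or> j = 0 then 0 else M $$ (i-1, j-1))"

lemma block_diag1_dims[simp]: "dim_row (block_diag1 n x M) = Suc n" "dim_col (block_diag1 n x M) = Suc n"
  by (simp_all add: block_diag1_def)

lemma block_diag1_index:
  "block_diag1 n x M $$ (0,0) = x"
  "j < n \<Longrightarrow> block_diag1 n x M $$ (0,Suc j) = 0"
  "i < n \<Longrightarrow> block_diag1 n x M $$ (Suc i,0) = 0"
  "i < n \<Longrightarrow> j < n \<Longrightarrow> block_diag1 n x M $$ (Suc i,Suc j) = M $$ (i,j)"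
  by (simp_all add: block_diag1_def)

lemma block_diag1_eqI:
  assumes "A \<in> carrier_mat (Suc n) (Suc n)"
    "A $$ (0,0) = x" "\<And>j. j < n \<Longrightarrow> A $$ (0,Suc j) = 0" "\<And>i. i < n \<Longrightarrow> A $$ (Suc i,0) = 0"
    "\<And>i j. i < n \<Longrightarrow> j < n \<Longrightarrow> A $$ (Suc i,Suc j) = M $$ (i,j)"
  shows "A = block_diag1 n x M"
proof (rule eq_matI)
  fix i j assume "i < dim_row (block_diag1 n x M)" "j < dim_col (block_diag1 n x M)"
  thus "A $$ (i,j) = block_diag1 n x M $$ (i,j)"
    using assms by (cases i; cases j) (auto simp: block_diag1_index)
qed (use assms in auto)

lemma block_diag1_mult:
  assumes M: "M \<in> carrier_mat n n" and N: "N \<in> carrier_mat n n"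
  shows "block_diag1 n x M * block_diag1 n y N = block_diag1 n (x * y) (M * N)"
proof (rule block_diag1_eqI)
  have e: "(block_diag1 n x M * block_diag1 n y N) $$ (i,j) = block_diag1 n x M $$ (i,0) * block_diag1 n y N $$ (0,j)
      + (\<Sum>k<n. block_diag1 n x M $$ (i,Suc k) * block_diag1 n y N $$ (Suc k,j))"
    if "i < Suc n" "j < Suc n" for i j
  proof -
    have "(block_diag1 n x M * block_diag1 n y N) $$ (i,j) = (\<Sum>k<Suc n. block_diag1 n x M $$ (i,k) * block_diag1 n y N $$ (k,j))"
      using that by (simp add: scalar_prod_def atLeast0LessThan)
    thus ?thesis by (simp only: sum.lessThan_Suc_shift)
  qed
  show "(block_diag1 n x M * block_diag1 n y N) $$ (0,0) = x * y"
    using e[of 0 0] by (simp add: block_diag1_index)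
  show "(block_diag1 n x M * block_diag1 n y N) $$ (0,Suc j) = 0" if "j < n" for j
    using e[of 0 "Suc j"] that by (simp add: block_diag1_index)
  show "(block_diag1 n x M * block_diag1 n y N) $$ (Suc i,0) = 0" if "i < n" for i
    using e[of "Suc i" 0] that by (simp add: block_diag1_index)
  show "(block_diag1 n x M * block_diag1 n y N) $$ (Suc i,Suc j) = (M * N) $$ (i,j)" if "i < n" "j < n" for i j
    using e[of "Suc i" "Suc j"] that M N by (simp add: block_diag1_index scalar_prod_def atLeast0LessThan)
qed auto

lemma adj_block_diag1: "M \<in> carrier_mat n n \<Longrightarrow> adj (block_diag1 n x M) = block_diag1 n (cnj x) (adj M)"
  by (rule block_diag1_eqI) (auto simp: block_diag1_index)

lemma block_diag1_one: "block_diag1 n 1 (1\<^sub>m n) = 1\<^sub>m (Suc n)"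
  by (rule sym, rule block_diag1_eqI) auto

lemma mat_diag_Suc: "mat_diag (Suc n) f = block_diag1 n (f 0) (mat_diag n (\<lambda>i. f (Suc i)))"
  by (rule block_diag1_eqI) (auto simp: mat_diag_def)

lemma unitary_block_diag1: "unitary n U \<Longrightarrow> unitary (Suc n) (block_diag1 n 1 U)"
  unfolding unitary_def by (auto simp: adj_block_diag1 block_diag1_mult block_diag1_one)

lemma unitary_mult:
  assumes U: "unitary n U" and V: "unitary n V"
  shows "unitary n (U * V)"
proof -
  have C: "U \<in> carrier_mat n n" "V \<in> carrier_mat n n" using U V by (simp_all add: unitary_def)
  have "adj (U * V) * (U * V) = adj V * (adj U * U) * V" "U * V * adj (U * V) = U * (V * adj V) * adj U"
    using C by (simp_all add: adj_mult assoc_mult_mat')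
  thus ?thesis using U V C by (simp add: unitary_def)
qed

lemma hermitian_block_of_first_col:
  assumes B: "B \<in> carrier_mat (Suc n) (Suc n)" and hB: "adj B = B"
    and colB: "col B 0 = e \<cdot>\<^sub>v unit_vec (Suc n) 0"
  shows "\<exists>d A'. A' \<in> carrier_mat n n \<and> adj A' = A' \<and> B = block_diag1 n (complex_of_real d) A'"
proof -
  have Bi0: "B $$ (i,0) = (if i = 0 then e else 0)" if "i < Suc n" for i
  proof -
    have "B $$ (i,0) = col B 0 $ i" using that B by simp
    thus ?thesis unfolding colB using that by simp
  qed
  have B0j: "B $$ (0,j) = (if j = 0 then cnj e else 0)" if "j < Suc n" for j
    using Bi0[OF that] that B hB by (metis adj_index carrier_matD complex_cnj_zero zero_less_Suc)
  have "cnj e = e" using Bi0[of 0] B0j[of 0] by simp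
  hence e: "e = complex_of_real (Re e)" by (metis Reals_cnj_iff complex_is_Real_iff of_real_Re)
  define A' where "A' = mat n n (\<lambda>(i,j). B $$ (Suc i, Suc j))"
  have "adj A' = A'"
  proof (rule eq_matI)
    fix i j assume "i < dim_row A'" "j < dim_col A'"
    hence ij: "i < n" "j < n" unfolding A'_def by auto
    have "adj A' $$ (i,j) = cnj (B $$ (Suc j, Suc i))" using ij unfolding A'_def by simp
    also have "\<dots> = adj B $$ (Suc i, Suc j)" using ij B by simp
    finally show "adj A' $$ (i,j) = A' $$ (i,j)" using ij hB unfolding A'_def by simp
  qed (auto simp: A'_def)
  moreover have "B = block_diag1 n (complex_of_real (Re e)) A'"
    by (rule block_diag1_eqI) (use B Bi0 B0j e in \<open>auto simp: A'_def\<close>)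
  moreover have "A' \<in> carrier_mat n n" by (simp add: A'_def)
  ultimately show ?thesis by blast
qed

text \<open>One step of the induction: a Householder reflection \<open>H\<close> taking \<open>e\<^sub>0\<close> to an eigenvector of \<open>A\<close>
  makes \<open>e\<^sub>0\<close> an eigenvector of \<open>H A H\<close>.\<close>

lemma hermitian_deflation:
  assumes A: "A \<in> carrier_mat (Suc n) (Suc n)" and hA: "adj A = A"
  shows "\<exists>H e A'. unitary (Suc n) H \<and> A' \<in> carrier_mat n n \<and> adj A' = A' \<and>
    A = H * block_diag1 n (complex_of_real e) A' * adj H"
proof -
  obtain e u r where u: "u \<in> carrier_vec (Suc n)" and unit: "(\<Sum>i<Suc n. cmod (u $ i) ^ 2) = 1"
    and u0: "u $ 0 = complex_of_real r" "0 \<le> r" and evu: "A *\<^sub>v u = e \<cdot>\<^sub>v u"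
    using unit_eigenvector_exists[OF A] by blast
  obtain H where H: "H \<in> carrier_mat (Suc n) (Suc n)" and hH: "adj H = H" and HH: "H * H = 1\<^sub>m (Suc n)"
    and Hc: "\<forall>i < Suc n. H $$ (i,0) = u $ i"
    using householder_reflection[OF u unit u0] by blast
  have colH: "col H 0 = u" using H Hc u by (intro eq_vecI) auto
  have "col (H * A * H) 0 = (H * A) *\<^sub>v col H 0"
    using H A by (intro col_mult2[of _ "Suc n" "Suc n"]) auto
  also have "\<dots> = e \<cdot>\<^sub>v (H *\<^sub>v col H 0)" using evu H A u colH by (simp add: mult_mat_vec)
  also have "H *\<^sub>v col H 0 = col (H * H) 0" using H by (intro col_mult2[symmetric, of _ "Suc n" "Suc n"]) auto
  finally have col: "col (H * A * H) 0 = e \<cdot>\<^sub>v unit_vec (Suc n) 0" using HH by simp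
  have "adj (H * A * H) = H * A * H" using H A hA hH by (simp add: adj_mult assoc_mult_mat')
  moreover have "H * A * H \<in> carrier_mat (Suc n) (Suc n)" using H A by simp
  ultimately obtain d A' where A': "A' \<in> carrier_mat n n" "adj A' = A'"
    and HAH: "H * A * H = block_diag1 n (complex_of_real d) A'"
    using hermitian_block_of_first_col[OF _ _ col] by blast
  have "H * (H * A * H) * adj H = (H * H) * A * (H * H)" unfolding hH using H A by (simp add: assoc_mult_mat')
  hence "A = H * block_diag1 n (complex_of_real d) A' * adj H" using HH A HAH by simp
  moreover have "unitary (Suc n) H" using H hH HH by (simp add: unitary_def)
  ultimately show ?thesis using A' by blast
qed

theorem hermitian_spectral:
  assumes "A \<in> carrier_mat n n" and "adj A = A"
  shows "\<exists>U d. unitary n U \<and> A = U * mat_diag n (\<lambda>i. complex_of_real (d i)) * adj U"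
  using assms
proof (induction n arbitrary: A)
  case 0
  show ?case by (rule exI[of _ "1\<^sub>m 0"]) (use 0 in \<open>auto intro!: eq_matI simp: unitary_def\<close>)
next
  case (Suc n)
  obtain H e A' where H: "unitary (Suc n) H" and A': "A' \<in> carrier_mat n n" "adj A' = A'"
    and AH: "A = H * block_diag1 n (complex_of_real e) A' * adj H"
    using hermitian_deflation[OF Suc.prems] by blast
  obtain U' d' where U': "unitary n U'" and A'd: "A' = U' * mat_diag n (\<lambda>i. complex_of_real (d' i)) * adj U'"
    using Suc.IH[OF A'] by blast
  define d where "d = (\<lambda>i. if i = 0 then e else d' (i - 1))"
  define U where "U = H * block_diag1 n 1 U'"
  have C: "H \<in> carrier_mat (Suc n) (Suc n)" "U' \<in> carrier_mat n n"
    using H U' by (simp_all add: unitary_def)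
  have "block_diag1 n (complex_of_real e) A' =
      block_diag1 n 1 U' * mat_diag (Suc n) (\<lambda>i. complex_of_real (d i)) * adj (block_diag1 n 1 U')"
    unfolding A'd mat_diag_Suc d_def adj_block_diag1[OF C(2)] using C(2)
    by (simp add: block_diag1_mult mult_carrier_mat)
  hence "A = U * mat_diag (Suc n) (\<lambda>i. complex_of_real (d i)) * adj U"
    unfolding AH U_def using C by (simp add: adj_mult assoc_mult_mat' mat_diag_def)
  moreover have "unitary (Suc n) U" unfolding U_def by (intro unitary_mult H unitary_block_diag1 U')
  ultimately show ?case by blast
qed

definition udiag :: "complex mat \<Rightarrow> nat \<Rightarrow> (nat \<Rightarrow> real) \<Rightarrow> complex mat" where
  "udiag U n g = U * mat_diag n (\<lambda>i. complex_of_real (g i)) * adj U"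

lemma hermitian_udiag:
  "A \<in> carrier_mat n n \<Longrightarrow> adj A = A \<Longrightarrow> \<exists>U d. unitary n U \<and> A = udiag U n d"
  using hermitian_spectral unfolding udiag_def by blast

lemma udiag_carrier[simp]: "unitary n U \<Longrightarrow> udiag U n g \<in> carrier_mat n n"
  unfolding udiag_def unitary_def by auto

lemma udiag_dims[simp]: "unitary n U \<Longrightarrow> dim_row (udiag U n g) = n" "unitary n U \<Longrightarrow> dim_col (udiag U n g) = n"
  using udiag_carrier by (auto simp del: udiag_carrier)

lemma udiag_cong: "(\<And>i. i < n \<Longrightarrow> f i = g i) \<Longrightarrow> udiag U n f = udiag U n g"
proof -
  assume "\<And>i. i < n \<Longrightarrow> f i = g i"
  hence "mat_diag n (\<lambda>i. complex_of_real (f i)) = mat_diag n (\<lambda>i. complex_of_real (g i))"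
    by (intro eq_matI) (auto simp: mat_diag_def)
  thus ?thesis by (simp add: udiag_def)
qed

lemma udiag_mult:
  assumes U: "unitary n U"
  shows "udiag U n f * udiag U n g = udiag U n (\<lambda>i. f i * g i)"
proof -
  have C: "U \<in> carrier_mat n n" "adj U * U = 1\<^sub>m n" using U unfolding unitary_def by auto
  have "udiag U n f * udiag U n g =
      U * mat_diag n (\<lambda>i. complex_of_real (f i)) * (adj U * U) * mat_diag n (\<lambda>i. complex_of_real (g i)) * adj U"
    unfolding udiag_def using carrier_matD[OF C(1)] by (simp add: assoc_mult_mat')
  also have "\<dots> = U * (mat_diag n (\<lambda>i. complex_of_real (f i)) * mat_diag n (\<lambda>i. complex_of_real (g i))) * adj U"
    unfolding C(2) using carrier_matD[OF C(1)] by (simp add: assoc_mult_mat')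
  finally show ?thesis unfolding mat_diag_diag udiag_def by simp
qed

lemma udiag_minus:
  assumes U: "unitary n U"
  shows "udiag U n f - udiag U n g = udiag U n (\<lambda>i. f i - g i)"
proof -
  have C: "U \<in> carrier_mat n n" using U unfolding unitary_def by auto
  have "mat_diag n (\<lambda>i. complex_of_real (f i - g i)) =
      mat_diag n (\<lambda>i. complex_of_real (f i)) - mat_diag n (\<lambda>i. complex_of_real (g i))"
    by (rule eq_matI) (auto simp: mat_diag_def)
  with C show ?thesis unfolding udiag_def
    by (simp add: mult_minus_distrib_mat' minus_mult_distrib_mat')
qed

lemma udiag_one: "unitary n U \<Longrightarrow> udiag U n (\<lambda>_. 1) = 1\<^sub>m n"
  unfolding udiag_def unitary_def by (auto simp: of_real_1)

lemma one_minus_udiag: "unitary n U \<Longrightarrow> 1\<^sub>m n - udiag U n g = udiag U n (\<lambda>i. 1 - g i)"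
  by (simp add: udiag_one[symmetric] udiag_minus)

lemma udiag_zero: "unitary n U \<Longrightarrow> udiag U n (\<lambda>_. 0) = 0\<^sub>m n n"
proof -
  assume "unitary n U"
  hence "U \<in> carrier_mat n n" by (simp add: unitary_def)
  moreover have "mat_diag n (\<lambda>_. 0 :: complex) = 0\<^sub>m n n" by (rule eq_matI) (auto simp: mat_diag_def)
  ultimately show ?thesis unfolding udiag_def by simp
qed

lemma adj_mat_diag_real: "adj (mat_diag n (\<lambda>i. complex_of_real (g i))) = mat_diag n (\<lambda>i. complex_of_real (g i))"
  by (rule eq_matI) (auto simp: mat_diag_def)

lemma adj_udiag: "unitary n U \<Longrightarrow> adj (udiag U n g) = udiag U n g"
  unfolding udiag_def unitary_def using carrier_matD[of U n n] by (simp add: adj_mult assoc_mult_mat' adj_mat_diag_real)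

section \<open>Positive semidefinite matrices\<close>

definition sform :: "complex mat \<Rightarrow> nat \<Rightarrow> (nat \<Rightarrow> complex) \<Rightarrow> (nat \<Rightarrow> complex) \<Rightarrow> complex" where
  "sform A n x y = (\<Sum>a<n. \<Sum>b<n. cnj (x a) * A $$ (a,b) * y b)"

lemma psd_iff_sform:
  "psd n A \<longleftrightarrow> A \<in> carrier_mat n n \<and> (\<forall>v. sform A n v v \<in> \<real> \<and> 0 \<le> Re (sform A n v v))"
proof -
  have vec: "sform A n v v = sform A n (\<lambda>i. vec n v $ i) (\<lambda>i. vec n v $ i)" for v
    unfolding sform_def by (intro sum.cong refl) auto
  have "(\<Sum>i<n. \<Sum>j<n. cnj (w $ i) * A $$ (i,j) * w $ j) = sform A n (\<lambda>i. w $ i) (\<lambda>i. w $ i)" for w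
    unfolding sform_def ..
  hence "psd n A \<longleftrightarrow> A \<in> carrier_mat n n \<and>
      (\<forall>w \<in> carrier_vec n. sform A n (\<lambda>i. w $ i) (\<lambda>i. w $ i) \<in> \<real> \<and> 0 \<le> Re (sform A n (\<lambda>i. w $ i) (\<lambda>i. w $ i)))"
    unfolding psd_def by simp
  thus ?thesis by (metis vec vec_carrier)
qed

lemma psd_sform: "psd n A \<Longrightarrow> sform A n x x \<in> \<real>" "psd n A \<Longrightarrow> 0 \<le> Re (sform A n x x)"
  unfolding psd_iff_sform by auto

lemma sform_gram:
  assumes F: "F \<in> carrier_mat m n"
  shows "sform (adj F * F) n v v = complex_of_real (\<Sum>k<m. cmod (\<Sum>j<n. F $$ (k,j) * v j) ^ 2)"
proof -
  have "sform (adj F * F) n v v = (\<Sum>i<n. \<Sum>j<n. \<Sum>k<m. cnj (F $$ (k,i) * v i) * (F $$ (k,j) * v j))"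
    unfolding sform_def using F
    by (intro sum.cong refl) (simp add: scalar_prod_def atLeast0LessThan sum_distrib_left sum_distrib_right mult_ac)
  also have "\<dots> = (\<Sum>i<n. \<Sum>k<m. \<Sum>j<n. cnj (F $$ (k,i) * v i) * (F $$ (k,j) * v j))"
    by (rule sum.cong[OF refl], rule sum.swap)
  also have "\<dots> = (\<Sum>k<m. \<Sum>i<n. \<Sum>j<n. cnj (F $$ (k,i) * v i) * (F $$ (k,j) * v j))"
    by (rule sum.swap)
  also have "\<dots> = (\<Sum>k<m. complex_of_real (cmod (\<Sum>j<n. F $$ (k,j) * v j) ^ 2))"
    by (simp only: sum_product[symmetric] cnj_sum[symmetric] cnj_mult_self)
  finally show ?thesis by (simp only: of_real_sum)
qed

lemma psd_gram: "F \<in> carrier_mat m n \<Longrightarrow> psd n (adj F * F)"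
  unfolding psd_iff_sform by (auto simp: sform_gram intro!: sum_nonneg)

lemma tr_gram:
  assumes F: "F \<in> carrier_mat m n"
  shows "tr (adj F * F) = complex_of_real (\<Sum>i<n. \<Sum>k<m. cmod (F $$ (k,i)) ^ 2)"
proof -
  have "tr (adj F * F) = (\<Sum>i<n. \<Sum>k<m. cnj (F $$ (k,i)) * F $$ (k,i))"
    unfolding tr_def using F by (intro sum.cong refl) (simp_all add: scalar_prod_def atLeast0LessThan)
  thus ?thesis by (simp only: cnj_mult_self of_real_sum)
qed

lemma tr_gram_nonneg: "F \<in> carrier_mat m n \<Longrightarrow> 0 \<le> Re (tr (adj F * F))"
  by (simp add: tr_gram sum_nonneg)

lemma tr_gram_eq_0_iff:
  assumes F: "F \<in> carrier_mat m n"
  shows "tr (adj F * F) = 0 \<longleftrightarrow> F = 0\<^sub>m m n"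
proof
  assume "tr (adj F * F) = 0"
  hence "(\<Sum>i<n. \<Sum>k<m. cmod (F $$ (k,i)) ^ 2) = 0" unfolding tr_gram[OF F] by (simp only: of_real_eq_0_iff)
  hence "\<forall>i<n. \<forall>k<m. cmod (F $$ (k,i)) ^ 2 = 0"
    by (simp add: sum_nonneg sum_nonneg_eq_0_iff)
  thus "F = 0\<^sub>m m n" using F by (intro eq_matI) auto
qed (simp add: tr_def)

lemma udiag_nonneg_gram:
  assumes U: "unitary n U" and g: "\<And>i. i < n \<Longrightarrow> 0 \<le> g i"
  shows "\<exists>R. R \<in> carrier_mat n n \<and> udiag U n g = adj R * R"
proof -
  have C: "U \<in> carrier_mat n n" using U unfolding unitary_def by auto
  define D where "D = mat_diag n (\<lambda>i. complex_of_real (sqrt (g i)))"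
  have "D * D = mat_diag n (\<lambda>i. complex_of_real (g i))"
    unfolding D_def mat_diag_diag using g by (intro eq_matI) (auto simp: mat_diag_def simp flip: of_real_mult)
  moreover have "adj (D * adj U) * (D * adj U) = U * (D * D) * adj U"
    unfolding D_def using carrier_matD[OF C]
    by (simp add: adj_mult assoc_mult_mat' adj_mat_diag_real del: mat_diag_diag)
  ultimately have "udiag U n g = adj (D * adj U) * (D * adj U)" unfolding udiag_def by simp
  moreover have "D * adj U \<in> carrier_mat n n" unfolding D_def using C by (intro mult_carrier_mat) auto
  ultimately show ?thesis by blast
qed

lemma psd_udiag: "unitary n U \<Longrightarrow> (\<And>i. i < n \<Longrightarrow> 0 \<le> g i) \<Longrightarrow> psd n (udiag U n g)"
  using udiag_nonneg_gram psd_gram by metis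

lemma tr_gram_mult_gram_nonneg:
  assumes F: "F \<in> carrier_mat k n" and G: "G \<in> carrier_mat l n"
  shows "0 \<le> Re (tr ((adj F * F) * (adj G * G)))"
proof -
  have "tr ((adj F * F) * (adj G * G)) = tr (adj F * ((F * adj G) * G))"
    using F G by (simp add: assoc_mult_mat')
  also have "\<dots> = tr (((F * adj G) * G) * adj F)" using F G by (intro tr_mult_comm[of _ n k]) auto
  also have "\<dots> = tr (adj (G * adj F) * (G * adj F))"
    using F G by (simp add: assoc_mult_mat' adj_mult)
  finally show ?thesis using tr_gram_nonneg[of "G * adj F" l k] F G by auto
qed

lemma tr_udiag_mult_udiag_nonneg:
  assumes "unitary n U" "unitary n V" "\<And>i. i < n \<Longrightarrow> 0 \<le> g i" "\<And>i. i < n \<Longrightarrow> 0 \<le> h i"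
  shows "0 \<le> Re (tr (udiag U n g * udiag V n h))"
proof -
  obtain R S where R: "R \<in> carrier_mat n n" "udiag U n g = adj R * R"
    and S: "S \<in> carrier_mat n n" "udiag V n h = adj S * S"
    using udiag_nonneg_gram[where U=U and g=g] udiag_nonneg_gram[where U=V and g=h] assms by blast
  show ?thesis unfolding R(2) S(2) by (rule tr_gram_mult_gram_nonneg[OF R(1) S(1)])
qed

lemma gram_index:
  "K \<in> carrier_mat a b \<Longrightarrow> s < b \<Longrightarrow> s' < b \<Longrightarrow> (adj K * K) $$ (s,s') = (\<Sum>r<a. cnj (K $$ (r,s)) * K $$ (r,s'))"
  by (simp add: scalar_prod_def atLeast0LessThan)

lemma gram_diag_index:
  assumes "M \<in> carrier_mat m n" "i < n"
  shows "(adj M * M) $$ (i,i) = complex_of_real (\<Sum>k<m. cmod (M $$ (k,i)) ^ 2)"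
  using assms by (simp add: scalar_prod_def atLeast0LessThan cnj_mult_self)

lemma gram_udiag_nonneg:
  assumes U: "unitary n U" and N: "N \<in> carrier_mat m n" and e: "adj N * N = udiag U n g" and i: "i < n"
  shows "0 \<le> g i"
proof -
  have C: "U \<in> carrier_mat n n" "adj U * U = 1\<^sub>m n" using U unfolding unitary_def by auto
  have "adj (N * U) * (N * U) = adj U * (adj N * N) * U"
    using carrier_matD[OF C(1)] carrier_matD[OF N] by (simp add: adj_mult assoc_mult_mat')
  also have "\<dots> = (adj U * U) * mat_diag n (\<lambda>i. complex_of_real (g i)) * (adj U * U)"
    unfolding e udiag_def using carrier_matD[OF C(1)] by (simp add: assoc_mult_mat')
  finally have "complex_of_real (g i) = (adj (N * U) * (N * U)) $$ (i,i)"
    using i unfolding C(2) by (simp add: mat_diag_def)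
  also have "\<dots> = complex_of_real (\<Sum>k<m. cmod ((N * U) $$ (k,i)) ^ 2)"
    by (rule gram_diag_index[OF mult_carrier_mat[OF N C(1)] i])
  finally have "g i = (\<Sum>k<m. cmod ((N * U) $$ (k,i)) ^ 2)" by (simp only: of_real_eq_iff)
  thus ?thesis by (simp add: sum_nonneg)
qed

lemma psd_transpose:
  assumes "psd n A"
  shows "psd n (transpose_mat A)"
proof -
  have AC: "A \<in> carrier_mat n n" using assms unfolding psd_def by auto
  have "sform (transpose_mat A) n v v = sform A n (\<lambda>i. cnj (v i)) (\<lambda>i. cnj (v i))" for v
  proof -
    have "sform (transpose_mat A) n v v = (\<Sum>i<n. \<Sum>j<n. cnj (v i) * A $$ (j,i) * v j)"
      unfolding sform_def using AC by (intro sum.cong refl) auto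
    also have "\<dots> = sform A n (\<lambda>i. cnj (v i)) (\<lambda>i. cnj (v i))"
      unfolding sform_def by (subst sum.swap) (intro sum.cong refl, simp add: mult_ac)
    finally show ?thesis .
  qed
  thus ?thesis using assms AC unfolding psd_iff_sform by auto
qed

lemma cauchy_schwarz_quadratic:
  fixes P R :: real and s :: complex
  assumes P: "0 \<le> P" and R: "0 \<le> R" and H: "\<And>t. 0 \<le> P + 2 * Re (t * s) + (cmod t)^2 * R"
  shows "(cmod s)^2 \<le> P * R"
proof (cases "R = 0")
  case False
  hence R0: "R > 0" using R by simp
  have "0 \<le> P + 2 * Re ((- cnj s / complex_of_real R) * s) + (cmod (- cnj s / complex_of_real R))^2 * R" by (rule H)
  also have "Re ((- cnj s / complex_of_real R) * s) = - ((cmod s)^2 / R)"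
  proof -
    have "(- cnj s / complex_of_real R) * s = - (cnj s * s) / complex_of_real R" by simp
    also have "\<dots> = - complex_of_real ((cmod s)^2 / R)" by (simp only: cnj_mult_self) simp
    finally show ?thesis by (simp only: uminus_complex.sel Re_complex_of_real)
  qed
  also have "(cmod (- cnj s / complex_of_real R))^2 * R = (cmod s)^2 / R"
    using R0 by (simp add: norm_divide power_divide power2_eq_square)
  finally show ?thesis using R0 by (simp add: field_simps)
next
  case True
  show ?thesis
  proof (rule ccontr)
    assume "\<not> ?thesis"
    hence s0: "(cmod s)^2 > 0" using True by simp
    define u where "u = (P + 1) / (cmod s)^2"
    have "0 \<le> P + 2 * Re ((- complex_of_real u * cnj s) * s) + (cmod (- complex_of_real u * cnj s))^2 * R" by (rule H)
    also have "Re ((- complex_of_real u * cnj s) * s) = - (u * (cmod s)^2)"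
    proof -
      have "(- complex_of_real u * cnj s) * s = - complex_of_real u * (cnj s * s)" by (simp add: mult.assoc)
      also have "\<dots> = - complex_of_real (u * (cmod s)^2)" by (simp only: cnj_mult_self) simp
      finally show ?thesis by (simp only: uminus_complex.sel Re_complex_of_real)
    qed
    also have "u * (cmod s)^2 = P + 1" unfolding u_def using s0 by simp
    finally show False using True P by simp
  qed
qed

lemma sform_add_expand: "sform A n (\<lambda>a. x a + t * y a) (\<lambda>a. x a + t * y a) =
   sform A n x x + t * sform A n x y + cnj t * sform A n y x + cnj t * t * sform A n y y"
  unfolding sform_def by (simp add: algebra_simps sum.distrib sum_distrib_left)

lemma psd_sform_hermitian:
  assumes A: "psd n A"
  shows "sform A n y x = cnj (sform A n x y)"
proof -
  let ?p = "sform A n x x" and ?q = "sform A n y y" and ?s1 = "sform A n x y" and ?s2 = "sform A n y x"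
  have "?p + ?s1 + ?s2 + ?q \<in> \<real>"
    using psd_sform(1)[OF A, of "\<lambda>a. x a + 1 * y a"] unfolding sform_add_expand by simp
  moreover have "?p + \<i> * ?s1 - \<i> * ?s2 + ?q \<in> \<real>"
    using psd_sform(1)[OF A, of "\<lambda>a. x a + \<i> * y a"] unfolding sform_add_expand by simp
  moreover have "?p \<in> \<real>" "?q \<in> \<real>" using psd_sform(1)[OF A] by auto
  ultimately have "Im (?s1 + ?s2) = 0" "Re (?s1 - ?s2) = 0"
    by (simp_all add: complex_is_Real_iff)
  thus ?thesis by (simp add: complex_eq_iff)
qed

text \<open>The sesquilinear form of \<open>A \<otimes> 1\<^sub>m\<close> on families of \<open>m\<close> vectors.\<close>

definition sform_sum :: "complex mat \<Rightarrow> nat \<Rightarrow> nat \<Rightarrow> (nat \<Rightarrow> nat \<Rightarrow> complex) \<Rightarrow> (nat \<Rightarrow> nat \<Rightarrow> complex) \<Rightarrow> complex" where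
  "sform_sum A n m x y = (\<Sum>k<m. sform A n (x k) (y k))"

lemma sform_sum_cauchy_schwarz:
  assumes A: "psd n A"
  shows "(cmod (sform_sum A n m x y))^2 \<le> Re (sform_sum A n m x x) * Re (sform_sum A n m y y)"
proof (rule cauchy_schwarz_quadratic)
  show "0 \<le> Re (sform_sum A n m x x)" "0 \<le> Re (sform_sum A n m y y)"
    unfolding sform_sum_def using psd_sform(2)[OF A] by (simp_all add: sum_nonneg)
  fix t
  have "0 \<le> Re (sform_sum A n m (\<lambda>k a. x k a + t * y k a) (\<lambda>k a. x k a + t * y k a))"
    unfolding sform_sum_def using psd_sform(2)[OF A] by (simp add: sum_nonneg)
  also have "sform_sum A n m (\<lambda>k a. x k a + t * y k a) (\<lambda>k a. x k a + t * y k a) =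
     sform_sum A n m x x + t * sform_sum A n m x y + cnj t * cnj (sform_sum A n m x y) + cnj t * t * sform_sum A n m y y"
    unfolding sform_sum_def sform_add_expand psd_sform_hermitian[OF A, of "y _" "x _"]
    by (simp add: sum.distrib sum_distrib_left cnj_sum)
  also have "Re \<dots> = Re (sform_sum A n m x x) + 2 * Re (t * sform_sum A n m x y) + (cmod t)^2 * Re (sform_sum A n m y y)"
  proof -
    have "Re (cnj t * t * sform_sum A n m y y) = (cmod t)^2 * Re (sform_sum A n m y y)"
      using cnj_mult_self[of t] by simp
    moreover have "Re (cnj t * cnj (sform_sum A n m x y)) = Re (t * sform_sum A n m x y)"
      by (simp only: complex_cnj_mult[symmetric]) simp
    ultimately show ?thesis by simp
  qed
  finally show "0 \<le> Re (sform_sum A n m x x) + 2 * Re (t * sform_sum A n m x y) + (cmod t)^2 * Re (sform_sum A n m y y)" .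
qed

lemma sform_one_minus:
  assumes E: "E \<in> carrier_mat n n"
  shows "sform (1\<^sub>m n - E) n u v = (\<Sum>a<n. cnj (u a) * v a) - sform E n u v"
proof -
  have "sform (1\<^sub>m n - E) n u v = (\<Sum>a<n. \<Sum>b<n. cnj (u a) * ((if a = b then 1 else 0) - E $$ (a,b)) * v b)"
    unfolding sform_def using E by (intro sum.cong refl) auto
  also have "\<dots> = (\<Sum>a<n. (\<Sum>b<n. if a = b then cnj (u a) * v b else 0) - (\<Sum>b<n. cnj (u a) * E $$ (a,b) * v b))"
    by (intro sum.cong refl, subst sum_subtractf[symmetric], rule sum.cong) (auto simp: algebra_simps)
  also have "\<dots> = (\<Sum>a<n. cnj (u a) * v a) - sform E n u v" unfolding sform_def by (simp add: sum_subtractf)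
  finally show ?thesis .
qed

text \<open>A measurement that accepts a unit vector \<open>x\<close> with certainty accepts any \<open>y\<close> with probability
  at least \<open>|\<langle>x, y\<rangle>|\<^sup>2\<close>: Cauchy--Schwarz for \<open>1 - E\<close> shows \<open>\<langle>x, y\<rangle> = \<langle>x, E y\<rangle>\<close>, and then
  Cauchy--Schwarz for \<open>E\<close> applies.\<close>

lemma accept_prob_ge_overlap_sq:
  assumes E: "povm_elem n E" and x_acc: "Re (sform_sum E n m x x) = 1"
    and x_unit: "(\<Sum>k<m. \<Sum>a<n. (cmod (x k a))^2) = 1"
  shows "(cmod (\<Sum>k<m. \<Sum>a<n. cnj (x k a) * y k a))^2 \<le> Re (sform_sum E n m y y)"
proof -
  have EC: "E \<in> carrier_mat n n" and psdE: "psd n E" and psdIE: "psd n (1\<^sub>m n - E)"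
    using E unfolding povm_elem_def psd_def by auto
  have compl: "sform_sum (1\<^sub>m n - E) n m u v = (\<Sum>k<m. \<Sum>a<n. cnj (u k a) * v k a) - sform_sum E n m u v" for u v
    unfolding sform_sum_def sform_one_minus[OF EC] by (simp add: sum_subtractf)
  have "(\<Sum>k<m. \<Sum>a<n. cnj (x k a) * x k a) = complex_of_real (\<Sum>k<m. \<Sum>a<n. (cmod (x k a))^2)"
    by (simp only: cnj_mult_self of_real_sum)
  hence "(\<Sum>k<m. \<Sum>a<n. cnj (x k a) * x k a) = 1" using x_unit by simp
  hence "Re (sform_sum (1\<^sub>m n - E) n m x x) = 0" unfolding compl using x_acc by simp
  hence "sform_sum (1\<^sub>m n - E) n m x y = 0"
    using sform_sum_cauchy_schwarz[OF psdIE, of m x y] by simp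
  hence "(\<Sum>k<m. \<Sum>a<n. cnj (x k a) * y k a) = sform_sum E n m x y" unfolding compl by simp
  thus ?thesis using sform_sum_cauchy_schwarz[OF psdE, of m x y] x_acc by simp
qed

section \<open>Trace distance and fidelity\<close>

text \<open>The algebra behind the Powers--Stormer inequality \<open>\<parallel>P\<^sub>0 - P\<^sub>1\<parallel>\<^sub>2\<^sup>2 \<le> \<parallel>P\<^sub>0\<^sup>2 - P\<^sub>1\<^sup>2\<parallel>\<^sub>1\<close>: with
  \<open>X = P\<^sub>0 - P\<^sub>1 = X\<^sub>+ - X\<^sub>-\<close> and \<open>Q\<close> the projection onto the nonnegative eigenspace of \<open>X\<close>, use
  \<open>P\<^sub>0\<^sup>2 - P\<^sub>1\<^sup>2 = X P\<^sub>0 + P\<^sub>1 X\<close> and \<open>Q X = X Q = X\<^sub>+\<close>.\<close>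

lemma powers_stormer_trace_bound:
  fixes P0 P1 Q Xp Xm :: "complex mat"
  assumes C: "P0 \<in> carrier_mat n n" "P1 \<in> carrier_mat n n" "Q \<in> carrier_mat n n"
      "Xp \<in> carrier_mat n n" "Xm \<in> carrier_mat n n"
    and QX: "Q * (P0 - P1) = Xp" and XQ: "(P0 - P1) * Q = Xp" and XPM: "P0 - P1 = Xp - Xm"
    and tr: "tr (P0 * P0) = tr (P1 * P1)"
    and a0: "0 \<le> Re (tr (Xp * P1))" and b0: "0 \<le> Re (tr (Xm * P0))"
  shows "Re (tr ((P0 - P1) * (P0 - P1))) \<le> 2 * Re (tr (Q * (P0 * P0 - P1 * P1)))"
proof -
  define X where "X = P0 - P1"
  have XC: "X \<in> carrier_mat n n" unfolding X_def using C by auto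
  note dims = carrier_matD[OF C(1)] carrier_matD[OF C(2)] carrier_matD[OF C(3)] carrier_matD[OF C(4)]
    carrier_matD[OF C(5)] carrier_matD[OF XC]
  have "X * P0 + P1 * X = (P0 * P0 - P1 * P0) + (P1 * P0 - P1 * P1)"
    unfolding X_def using dims by (simp add: minus_mult_distrib_mat' mult_minus_distrib_mat')
  also have "\<dots> = P0 * P0 - P1 * P1" by (rule eq_matI) (use dims in auto)
  finally have sq_diff: "P0 * P0 - P1 * P1 = X * P0 + P1 * X" ..
  have "tr (Q * (P0 * P0 - P1 * P1)) = tr (Q * X * P0) + tr (Q * P1 * X)"
    unfolding sq_diff using dims by (simp add: mult_add_distrib_mat' tr_add assoc_mult_mat')
  also have "tr (Q * P1 * X) = tr (X * Q * P1)"
    using tr_mult_comm[OF mult_carrier_mat[OF C(3,2)] XC] dims by (simp add: assoc_mult_mat')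
  finally have trQ: "tr (Q * (P0 * P0 - P1 * P1)) = tr (Xp * P0) + tr (Xp * P1)"
    unfolding X_def QX XQ .
  have "X * X = (Xp - Xm) * (P0 - P1)" by (subst (1) X_def, subst XPM, unfold X_def, rule refl)
  hence trX: "tr (X * X) = tr (Xp * P0) - tr (Xp * P1) - (tr (Xm * P0) - tr (Xm * P1))"
    using dims by (simp add: minus_mult_distrib_mat' mult_minus_distrib_mat' tr_minus)
  have "0 = tr (P0 * P0 - P1 * P1)" using tr dims by (simp add: tr_minus)
  also have "\<dots> = tr (X * P0) + tr (X * P1)"
    unfolding sq_diff using dims tr_mult_comm[OF C(2) XC] by (simp add: tr_add)
  finally have "0 = tr (Xp * P0) - tr (Xm * P0) + (tr (Xp * P1) - tr (Xm * P1))"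
    unfolding X_def XPM using dims by (simp add: minus_mult_distrib_mat' tr_minus)
  from arg_cong[where f=Re, OF this] arg_cong[where f=Re, OF trQ] arg_cong[where f=Re, OF trX] a0 b0
  show ?thesis unfolding X_def[symmetric] by simp
qed

lemma powers_stormer:
  assumes U0: "unitary n U0" and U1: "unitary n U1"
    and g0: "\<And>i. i < n \<Longrightarrow> 0 \<le> g0 i" and g1: "\<And>i. i < n \<Longrightarrow> 0 \<le> g1 i"
    and P0: "P0 = udiag U0 n g0" and P1: "P1 = udiag U1 n g1"
    and tr: "tr (P0 * P0) = tr (P1 * P1)"
  shows "\<exists>Q. povm_elem n Q \<and> Re (tr ((P0 - P1) * (P0 - P1))) \<le> 2 * Re (tr (Q * (P0 * P0 - P1 * P1)))"
proof -
  have C: "P0 \<in> carrier_mat n n" "P1 \<in> carrier_mat n n" using U0 U1 P0 P1 by auto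
  have "adj (P0 - P1) = P0 - P1" using C U0 U1 P0 P1 by (simp add: adj_minus[of _ n n] adj_udiag)
  then obtain V x where V: "unitary n V" and X: "P0 - P1 = udiag V n x"
    using hermitian_udiag[OF minus_carrier_mat[OF C(2)]] by blast
  define Q where "Q = udiag V n (\<lambda>i. if 0 \<le> x i then 1 else 0)"
  define Xp where "Xp = udiag V n (\<lambda>i. max (x i) 0)"
  define Xm where "Xm = udiag V n (\<lambda>i. max (- x i) 0)"
  have "povm_elem n Q"
    unfolding povm_elem_def Q_def one_minus_udiag[OF V] by (intro conjI psd_udiag[OF V]) auto
  moreover have "Re (tr ((P0 - P1) * (P0 - P1))) \<le> 2 * Re (tr (Q * (P0 * P0 - P1 * P1)))"
  proof (rule powers_stormer_trace_bound[OF C _ _ _ _ _ _ tr])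
    show "Q \<in> carrier_mat n n" "Xp \<in> carrier_mat n n" "Xm \<in> carrier_mat n n"
      using V unfolding Q_def Xp_def Xm_def by auto
    show "Q * (P0 - P1) = Xp" "(P0 - P1) * Q = Xp"
      unfolding Q_def X Xp_def udiag_mult[OF V] by (rule udiag_cong, simp)+
    show "P0 - P1 = Xp - Xm" unfolding X Xp_def Xm_def udiag_minus[OF V] by (rule udiag_cong) auto
    show "0 \<le> Re (tr (Xp * P1))" "0 \<le> Re (tr (Xm * P0))"
      unfolding Xp_def Xm_def P0 P1 by (rule tr_udiag_mult_udiag_nonneg; use V U0 U1 g0 g1 in simp)+
  qed
  ultimately show ?thesis by blast
qed

definition partial_isometry :: "complex mat \<Rightarrow> bool" where
  "partial_isometry Y \<longleftrightarrow> Y * adj Y * Y = Y"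

lemma mult_eq_of_gram_compl_zero:
  assumes N: "N \<in> carrier_mat m n" and P: "P \<in> carrier_mat n n" "adj P = P"
    and Z: "(1\<^sub>m n - P) * (adj N * N) * (1\<^sub>m n - P) = 0\<^sub>m n n"
  shows "N * P = N"
proof -
  define K where "K = N * (1\<^sub>m n - P)"
  have KC: "K \<in> carrier_mat m n" unfolding K_def by (intro mult_carrier_mat[OF N]) (use P in auto)
  have "adj K * K = (1\<^sub>m n - P) * (adj N * N) * (1\<^sub>m n - P)"
    unfolding K_def using N P by (simp add: adj_mult adj_minus[of _ n n] assoc_mult_mat')
  hence "tr (adj K * K) = 0" unfolding Z by (simp add: tr_def)
  hence "K = 0\<^sub>m m n" using tr_gram_eq_0_iff[OF KC] by simp
  moreover have "K = N - N * P" unfolding K_def using N P by (simp add: mult_minus_distrib_mat')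
  ultimately have Z': "N - N * P = 0\<^sub>m m n" by simp
  show ?thesis
  proof (rule eq_matI)
    fix i j assume ij: "i < dim_row N" "j < dim_col N"
    have "(N - N * P) $$ (i,j) = 0" using Z' ij N by simp
    thus "(N * P) $$ (i,j) = N $$ (i,j)" using ij N P by simp
  qed (use N P in auto)
qed

lemma polar_decomposition:
  assumes N: "N \<in> carrier_mat m n"
  shows "\<exists>U g Y. unitary n U \<and> (\<forall>i<n. 0 \<le> g i) \<and> Y \<in> carrier_mat m n \<and> partial_isometry Y \<and>
     udiag U n g * udiag U n g = adj N * N \<and> N = Y * udiag U n g \<and> adj Y * Y * udiag U n g = udiag U n g"
proof -
  have "adj (adj N * N) = adj N * N" using N by (simp add: adj_mult)
  then obtain U h where U: "unitary n U" and NN: "adj N * N = udiag U n h"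
    using hermitian_udiag[OF mult_carrier_mat[OF adj_carrier[OF N] N]] by blast
  have h0: "\<forall>i<n. 0 \<le> h i" using gram_udiag_nonneg[OF U N NN] by blast
  define g where "g = (\<lambda>i. sqrt (h i))"
  define Pi where "Pi = udiag U n (\<lambda>i. if 0 < h i then 1 else 0)"
  define Pinv where "Pinv = udiag U n (\<lambda>i. if 0 < h i then 1 / g i else 0)"
  define Y where "Y = N * Pinv"
  have C: "U \<in> carrier_mat n n" "Pi \<in> carrier_mat n n" "Pinv \<in> carrier_mat n n"
    using U unfolding Pi_def Pinv_def by (simp_all add: unitary_carrier)
  hence "Y \<in> carrier_mat m n" unfolding Y_def by (intro mult_carrier_mat[OF N])
  note C = C this
  note dims = carrier_matD[OF N] carrier_matD[OF C(2)] carrier_matD[OF C(3)] carrier_matD[OF C(4)]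
  have gg: "udiag U n g * udiag U n g = adj N * N"
    unfolding NN g_def udiag_mult[OF U] using h0 by (intro udiag_cong) auto
  \<comment> \<open>\<open>Pi\<close> projects onto the support of \<open>N\<^sup>* N\<close>, which contains the row space of \<open>N\<close>\<close>
  have "N * Pi = N"
    by (rule mult_eq_of_gram_compl_zero[OF N C(2)])
      (use U h0 in \<open>auto simp: Pi_def adj_udiag one_minus_udiag NN udiag_mult udiag_zero[symmetric] intro!: udiag_cong\<close>)
  moreover have "Pinv * udiag U n g = Pi"
    unfolding Pinv_def Pi_def g_def udiag_mult[OF U] by (rule udiag_cong) auto
  ultimately have NY: "N = Y * udiag U n g" unfolding Y_def using dims U by (simp add: assoc_mult_mat')
  have "adj Y * Y = adj Pinv * (adj N * N) * Pinv" unfolding Y_def using dims by (simp add: adj_mult assoc_mult_mat')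
  also have "\<dots> = Pi" unfolding NN Pinv_def Pi_def adj_udiag[OF U] udiag_mult[OF U] g_def
    using h0 by (intro udiag_cong) auto
  finally have YY: "adj Y * Y = Pi" .
  have "Pinv * Pi = Pinv" unfolding Pinv_def Pi_def udiag_mult[OF U] by (rule udiag_cong) auto
  hence "Y * Pi = Y" unfolding Y_def using dims by (simp add: assoc_mult_mat')
  hence "partial_isometry Y" unfolding partial_isometry_def using dims by (simp add: assoc_mult_mat' YY)
  moreover have "adj Y * Y * udiag U n g = udiag U n g"
    unfolding YY Pi_def udiag_mult[OF U] g_def using h0 by (intro udiag_cong) (auto simp: order.order_iff_strict)
  moreover have "\<forall>i<n. 0 \<le> g i" using h0 by (simp add: g_def)
  ultimately show ?thesis using U C(4) gg NY by blast
qed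

lemma idempotent_compl:
  assumes E: "E \<in> carrier_mat n n" and EE: "E * E = E"
  shows "(1\<^sub>m n - E) * (1\<^sub>m n - E) = 1\<^sub>m n - (E :: complex mat)"
proof -
  have "(1\<^sub>m n - E) * (1\<^sub>m n - E) = (1\<^sub>m n - E) - (E - E * E)"
    using E by (simp add: minus_mult_distrib_mat' mult_minus_distrib_mat')
  thus ?thesis unfolding EE using E by (simp add: minus_mult_distrib_mat')
      (rule eq_matI, auto)
qed

lemma partial_isometry_completion:
  assumes Y0: "Y0 \<in> carrier_mat s c" and Y1: "Y1 \<in> carrier_mat s c"
    and pi0: "partial_isometry Y0" and pi1: "partial_isometry Y1"
  shows "\<exists>F1 F2. F1 \<in> carrier_mat s s \<and> F2 \<in> carrier_mat c s \<and>
    adj (Y1 * adj Y0) * (Y1 * adj Y0) + adj F1 * F1 + adj F2 * F2 = 1\<^sub>m s"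
proof -
  define E0 where "E0 = Y0 * adj Y0"
  define Pi1 where "Pi1 = adj Y1 * Y1"
  have E0C: "E0 \<in> carrier_mat s s" and Pi1C: "Pi1 \<in> carrier_mat c c" unfolding E0_def Pi1_def using Y0 Y1 by auto
  note dims = carrier_matD[OF Y0] carrier_matD[OF Y1] carrier_matD[OF E0C] carrier_matD[OF Pi1C]
  have E0E0: "E0 * E0 = E0" and Pi1Pi1: "Pi1 * Pi1 = Pi1"
    using pi0 pi1 dims unfolding E0_def Pi1_def partial_isometry_def by (simp_all add: assoc_mult_mat')
      (simp_all flip: assoc_mult_mat')
  have aE0: "adj E0 = E0" and aPi1: "adj Pi1 = Pi1" unfolding E0_def Pi1_def using dims by (simp_all add: adj_mult)
  have "adj (Y1 * adj Y0) * (Y1 * adj Y0) = Y0 * Pi1 * adj Y0"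
    unfolding Pi1_def using dims by (simp add: adj_mult assoc_mult_mat')
  moreover have "adj (1\<^sub>m s - E0) * (1\<^sub>m s - E0) = 1\<^sub>m s - E0"
    using idempotent_compl[OF E0C E0E0] E0C by (simp add: adj_minus[of _ s s] aE0)
  moreover have "adj ((1\<^sub>m c - Pi1) * adj Y0) * ((1\<^sub>m c - Pi1) * adj Y0) = E0 - Y0 * Pi1 * adj Y0"
  proof -
    have "adj ((1\<^sub>m c - Pi1) * adj Y0) * ((1\<^sub>m c - Pi1) * adj Y0) = Y0 * ((1\<^sub>m c - Pi1) * (1\<^sub>m c - Pi1)) * adj Y0"
      using dims Pi1C by (simp add: adj_mult adj_minus[of _ c c] aPi1 assoc_mult_mat')
    also have "\<dots> = E0 - Y0 * Pi1 * adj Y0"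
      unfolding idempotent_compl[OF Pi1C Pi1Pi1] E0_def using dims
      by (simp add: mult_minus_distrib_mat' minus_mult_distrib_mat')
    finally show ?thesis .
  qed
  moreover have "(1\<^sub>m s - E0) \<in> carrier_mat s s" "(1\<^sub>m c - Pi1) * adj Y0 \<in> carrier_mat c s"
    using E0C Pi1C Y0 by auto
  ultimately show ?thesis using dims
    by (intro exI[of _ "1\<^sub>m s - E0"] exI[of _ "(1\<^sub>m c - Pi1) * adj Y0"]) (auto intro!: eq_matI)
qed

lemma partial_isometry_overlap:
  assumes Y: "Y0 \<in> carrier_mat s c" "Y1 \<in> carrier_mat s c" and P: "P0 \<in> carrier_mat c c" "P1 \<in> carrier_mat c c"
    and aP1: "adj P1 = P1" and YYP0: "adj Y0 * Y0 * P0 = P0" and YYP1: "adj Y1 * Y1 * P1 = P1"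
  shows "adj (Y1 * P1) * (Y1 * adj Y0) * (Y0 * P0) = P1 * P0"
proof -
  note dims = carrier_matD[OF Y(1)] carrier_matD[OF Y(2)] carrier_matD[OF P(1)] carrier_matD[OF P(2)]
  have "P1 * (adj Y1 * Y1) = P1"
    using arg_cong[where f=adj, OF YYP1] dims by (simp add: adj_mult aP1 assoc_mult_mat')
  moreover have "adj (Y1 * P1) * (Y1 * adj Y0) * (Y0 * P0) = (P1 * (adj Y1 * Y1)) * (adj Y0 * Y0 * P0)"
    using dims by (simp add: adj_mult aP1 assoc_mult_mat')
  ultimately show ?thesis using YYP0 by (simp only:)
qed

text \<open>Uhlmann's theorem combined with the Fuchs--van de Graaf inequality: for purifications \<open>N\<^sub>0, N\<^sub>1\<close>
  of the states \<open>N\<^sub>b\<^sup>* N\<^sub>b\<close>, some contraction \<open>V\<close> and some measurement \<open>Q\<close> satisfy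
  \<open>Re tr (N\<^sub>1\<^sup>* V N\<^sub>0) \<ge> 1 - tr (Q (N\<^sub>0\<^sup>* N\<^sub>0 - N\<^sub>1\<^sup>* N\<^sub>1))\<close>. With the polar decompositions \<open>N\<^sub>b = Y\<^sub>b P\<^sub>b\<close>,
  \<open>V = Y\<^sub>1 Y\<^sub>0\<^sup>*\<close> gives \<open>tr (N\<^sub>1\<^sup>* V N\<^sub>0) = tr (P\<^sub>1 P\<^sub>0) = 1 - \<parallel>P\<^sub>0 - P\<^sub>1\<parallel>\<^sub>2\<^sup>2 / 2\<close>, and Powers--Stormer bounds the
  last norm.\<close>

lemma fuchs_van_de_graaf_uhlmann:
  assumes N0: "N0 \<in> carrier_mat s c" and N1: "N1 \<in> carrier_mat s c"
    and t0: "tr (adj N0 * N0) = 1" and t1: "tr (adj N1 * N1) = 1"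
  shows "\<exists>V Q F1 F2. V \<in> carrier_mat s s \<and> F1 \<in> carrier_mat s s \<and> F2 \<in> carrier_mat c s \<and> povm_elem c Q \<and>
     adj V * V + adj F1 * F1 + adj F2 * F2 = 1\<^sub>m s \<and>
     1 - Re (tr (Q * (adj N0 * N0 - adj N1 * N1))) \<le> Re (tr (adj N1 * V * N0))"
proof -
  obtain U0 g0 Y0 where U0: "unitary c U0" and g0: "\<forall>i<c. 0 \<le> g0 i" and Y0: "Y0 \<in> carrier_mat s c"
    and pi0: "partial_isometry Y0" and PP0: "udiag U0 c g0 * udiag U0 c g0 = adj N0 * N0"
    and NY0: "N0 = Y0 * udiag U0 c g0" and YYP0: "adj Y0 * Y0 * udiag U0 c g0 = udiag U0 c g0"
    using polar_decomposition[OF N0] by blast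
  obtain U1 g1 Y1 where U1: "unitary c U1" and g1: "\<forall>i<c. 0 \<le> g1 i" and Y1: "Y1 \<in> carrier_mat s c"
    and pi1: "partial_isometry Y1" and PP1: "udiag U1 c g1 * udiag U1 c g1 = adj N1 * N1"
    and NY1: "N1 = Y1 * udiag U1 c g1" and YYP1: "adj Y1 * Y1 * udiag U1 c g1 = udiag U1 c g1"
    using polar_decomposition[OF N1] by blast
  define P0 where "P0 = udiag U0 c g0"
  define P1 where "P1 = udiag U1 c g1"
  have P0C: "P0 \<in> carrier_mat c c" and P1C: "P1 \<in> carrier_mat c c" and aP1: "adj P1 = P1"
    unfolding P0_def P1_def using U0 U1 by (simp_all add: adj_udiag)
  have PP: "P0 * P0 = adj N0 * N0" "P1 * P1 = adj N1 * N1" using PP0 PP1 unfolding P0_def P1_def .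
  obtain Q where Q: "povm_elem c Q" and PS: "Re (tr ((P0 - P1) * (P0 - P1))) \<le> 2 * Re (tr (Q * (P0 * P0 - P1 * P1)))"
    using powers_stormer[OF U0 U1 _ _ P0_def P1_def] g0 g1 PP t0 t1 by auto
  have "tr ((P0 - P1) * (P0 - P1)) = 2 - 2 * tr (P1 * P0)"
    using P0C P1C carrier_matD[OF N0] carrier_matD[OF N1] tr_mult_comm[OF P0C P1C] PP t0 t1
    by (simp add: minus_mult_distrib_mat' mult_minus_distrib_mat' tr_minus)
  moreover have "adj N1 * (Y1 * adj Y0) * N0 = P1 * P0"
    unfolding NY0 NY1 P0_def[symmetric] P1_def[symmetric]
    by (rule partial_isometry_overlap[OF Y0 Y1 P0C P1C aP1 YYP0[folded P0_def] YYP1[folded P1_def]])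
  ultimately have "1 - Re (tr (Q * (adj N0 * N0 - adj N1 * N1))) \<le> Re (tr (adj N1 * (Y1 * adj Y0) * N0))"
    using PS unfolding PP by simp
  moreover obtain F1 F2 where "F1 \<in> carrier_mat s s" "F2 \<in> carrier_mat c s"
    "adj (Y1 * adj Y0) * (Y1 * adj Y0) + adj F1 * F1 + adj F2 * F2 = 1\<^sub>m s"
    using partial_isometry_completion[OF Y0 Y1 pi0 pi1] by blast
  moreover have "Y1 * adj Y0 \<in> carrier_mat s s" using Y0 Y1 by auto
  ultimately show ?thesis using Q by blast
qed

section \<open>Quantum channels on pure states\<close>

lemma sum_lessThan_mult: "(\<Sum>i<a*b. f i) = (\<Sum>x<a. \<Sum>y<b. f (x*b + y))" for a b :: nat
proof (induction a)
  case (Suc a)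
  have "(\<Sum>i<Suc a * b. f i) = (\<Sum>i<a*b. f i) + (\<Sum>i\<in>{a*b..<a*b+b}. f i)"
    by (simp add: sum.atLeastLessThan_concat[symmetric] lessThan_atLeast0 add.commute)
  also have "(\<Sum>i\<in>{a*b..<a*b+b}. f i) = (\<Sum>y<b. f (a*b + y))"
    by (simp add: sum.shift_bounds_nat_ivl[of f 0 "a*b" b, simplified] lessThan_atLeast0 add.commute)
  finally show ?case using Suc by simp
qed simp

lemma sum_lessThan_mult_swap: "(\<Sum>k<m. \<Sum>r<a. f (r*m + k)) = (\<Sum>t<a*m. f t)" for a m :: nat
  by (simp add: sum_lessThan_mult sum.swap[of _ "{..<m}"])

lemma sum_lessThan_zero_tail:
  fixes L m :: nat
  assumes "L \<le> m" "\<And>k. L \<le> k \<Longrightarrow> k < m \<Longrightarrow> f k = 0"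
  shows "(\<Sum>k<m. f k) = (\<Sum>k<L. f k)"
proof -
  have "(\<Sum>k<m. f k) = (\<Sum>k<L. f k) + (\<Sum>k\<in>{L..<m}. f k)"
    using assms(1) by (simp add: lessThan_atLeast0 sum.atLeastLessThan_concat)
  also have "(\<Sum>k\<in>{L..<m}. f k) = 0" using assms(2) by (intro sum.neutral) auto
  finally show ?thesis by simp
qed

lemma index_pair_less: "c < a \<Longrightarrow> s < b \<Longrightarrow> c * b + s < a * b" for a b c s :: nat
proof -
  assume "c < a" "s < b"
  hence "c * b + s < (c + 1) * b" by simp
  also have "\<dots> \<le> a * b" using \<open>c < a\<close> by (intro mult_right_mono) auto
  finally show ?thesis .
qed

lemma sum_nth_append:
  "(\<Sum>l<length (xs @ ys). f ((xs @ ys) ! l)) = (\<Sum>l<length xs. f (xs ! l)) + (\<Sum>l<length ys. f (ys ! l))"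
proof -
  have nth: "sum_list (map f zs) = (\<Sum>l<length zs. f (zs ! l))" for zs
    by (simp add: sum_list_sum_nth lessThan_atLeast0)
  show ?thesis by (simp only: nth[symmetric] map_append sum_list_append)
qed

definition mat_app :: "complex mat \<Rightarrow> (nat \<Rightarrow> complex) \<Rightarrow> nat \<Rightarrow> complex" where
  "mat_app K x i = (\<Sum>a<dim_col K. K $$ (i,a) * x a)"

lemma kraus_sum:
  assumes "\<forall>K\<in>set Ks. K \<in> carrier_mat dout din"
  shows "foldr (\<lambda>K acc. adj K * K + acc) Ks (0\<^sub>m din din) =
    mat din din (\<lambda>(a,b). \<Sum>l<length Ks. (adj (Ks!l) * Ks!l) $$ (a,b))"
  using assms
proof (induction Ks)
  case (Cons K Ks)
  hence K: "K \<in> carrier_mat dout din" by auto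
  show ?case
  proof (rule eq_matI)
    fix a b assume "a < dim_row (mat din din (\<lambda>(a,b). \<Sum>l<length (K # Ks). (adj ((K # Ks)!l) * (K # Ks)!l) $$ (a,b)))"
      "b < dim_col (mat din din (\<lambda>(a,b). \<Sum>l<length (K # Ks). (adj ((K # Ks)!l) * (K # Ks)!l) $$ (a,b)))"
    hence ab: "a < din" "b < din" by auto
    have "foldr (\<lambda>K acc. adj K * K + acc) (K # Ks) (0\<^sub>m din din) $$ (a,b)
      = (adj K * K) $$ (a,b) + (\<Sum>l<length Ks. (adj (Ks!l) * Ks!l) $$ (a,b))"
      using Cons K ab by simp
    also have "\<dots> = (\<Sum>l<length (K # Ks). (adj ((K # Ks)!l) * (K # Ks)!l) $$ (a,b))"
      by (simp only: length_Cons sum.lessThan_Suc_shift nth_Cons_0 nth_Cons_Suc)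
    finally show "foldr (\<lambda>K acc. adj K * K + acc) (K # Ks) (0\<^sub>m din din) $$ (a,b) =
      mat din din (\<lambda>(a,b). \<Sum>l<length (K # Ks). (adj ((K # Ks)!l) * (K # Ks)!l) $$ (a,b)) $$ (a,b)"
      using ab by simp
  qed (use Cons K in auto)
qed (auto intro: eq_matI)

lemma kraus_iff_gram_sum:
  assumes "\<forall>K\<in>set Ks. K \<in> carrier_mat dout din"
  shows "kraus din dout Ks \<longleftrightarrow>
    (\<forall>a<din. \<forall>b<din. (\<Sum>l<length Ks. (adj (Ks!l) * Ks!l) $$ (a,b)) = 1\<^sub>m din $$ (a,b))"
proof -
  let ?S = "mat din din (\<lambda>(a,b). \<Sum>l<length Ks. (adj (Ks!l) * Ks!l) $$ (a,b))"
  have "?S = 1\<^sub>m din \<longleftrightarrow> (\<forall>a<din. \<forall>b<din. ?S $$ (a,b) = 1\<^sub>m din $$ (a,b))"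
  proof
    assume "?S = 1\<^sub>m din"
    thus "\<forall>a<din. \<forall>b<din. ?S $$ (a,b) = 1\<^sub>m din $$ (a,b)" by (simp only:) simp
  qed (auto intro!: eq_matI)
  thus ?thesis unfolding kraus_def kraus_sum[OF assms] using assms by simp
qed

lemma conj_rank_one:
  assumes K: "K \<in> carrier_mat dout din"
  shows "K * mat din din (\<lambda>(i,j). x i * cnj (x j)) * adj K =
    mat dout dout (\<lambda>(i,j). mat_app K x i * cnj (mat_app K x j))"
proof (rule eq_matI)
  fix i j assume "i < dim_row (mat dout dout (\<lambda>(i,j). mat_app K x i * cnj (mat_app K x j)))"
    "j < dim_col (mat dout dout (\<lambda>(i,j). mat_app K x i * cnj (mat_app K x j)))"
  hence ij: "i < dout" "j < dout" by auto
  have "(K * mat din din (\<lambda>(i,j). x i * cnj (x j)) * adj K) $$ (i,j) =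
     (\<Sum>b<din. \<Sum>a<din. (K $$ (i,a) * x a) * cnj (K $$ (j,b) * x b))"
    using K ij by (simp add: scalar_prod_def atLeast0LessThan sum_distrib_left sum_distrib_right mult_ac)
  also have "\<dots> = mat_app K x i * cnj (mat_app K x j)"
    unfolding mat_app_def using K by (subst sum.swap) (simp add: sum_product cnj_sum)
  finally show "(K * mat din din (\<lambda>(i,j). x i * cnj (x j)) * adj K) $$ (i,j) =
       mat dout dout (\<lambda>(i,j). mat_app K x i * cnj (mat_app K x j)) $$ (i,j)" using ij by simp
qed (use K in auto)

lemma apply_ch_rank_one:
  assumes "\<forall>K\<in>set Ks. K \<in> carrier_mat dout din"
  shows "apply_ch dout Ks (mat din din (\<lambda>(i,j). x i * cnj (x j))) =
    mat dout dout (\<lambda>(i,j). \<Sum>l<length Ks. mat_app (Ks!l) x i * cnj (mat_app (Ks!l) x j))"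
  using assms
proof (induction Ks)
  case (Cons K Ks)
  hence K: "K \<in> carrier_mat dout din" by auto
  have IH: "apply_ch dout Ks (mat din din (\<lambda>(i,j). x i * cnj (x j))) =
    mat dout dout (\<lambda>(i,j). \<Sum>l<length Ks. mat_app (Ks!l) x i * cnj (mat_app (Ks!l) x j))" using Cons by auto
  have e: "apply_ch dout (K # Ks) \<rho> = K * \<rho> * adj K + apply_ch dout Ks \<rho>" for \<rho>
    by (simp add: apply_ch_def)
  show ?case
  proof (rule eq_matI)
    fix i j assume "i < dim_row (mat dout dout (\<lambda>(i,j). \<Sum>l<length (K # Ks). mat_app ((K # Ks)!l) x i * cnj (mat_app ((K # Ks)!l) x j)))"
      "j < dim_col (mat dout dout (\<lambda>(i,j). \<Sum>l<length (K # Ks). mat_app ((K # Ks)!l) x i * cnj (mat_app ((K # Ks)!l) x j)))"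
    hence ij: "i < dout" "j < dout" by auto
    have "apply_ch dout (K # Ks) (mat din din (\<lambda>(i,j). x i * cnj (x j))) $$ (i,j) =
      mat_app K x i * cnj (mat_app K x j) + (\<Sum>l<length Ks. mat_app (Ks!l) x i * cnj (mat_app (Ks!l) x j))"
      unfolding e IH conj_rank_one[OF K] using ij by simp
    also have "\<dots> = (\<Sum>l<length (K # Ks). mat_app ((K # Ks)!l) x i * cnj (mat_app ((K # Ks)!l) x j))"
      by (simp only: length_Cons sum.lessThan_Suc_shift nth_Cons_0 nth_Cons_Suc)
    finally show "apply_ch dout (K # Ks) (mat din din (\<lambda>(i,j). x i * cnj (x j))) $$ (i,j) =
      mat dout dout (\<lambda>(i,j). \<Sum>l<length (K # Ks). mat_app ((K # Ks)!l) x i * cnj (mat_app ((K # Ks)!l) x j)) $$ (i,j)"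
      using ij by simp
  qed (auto simp: e IH conj_rank_one[OF K])
qed (auto simp: apply_ch_def intro: eq_matI)

lemma kron_dims[simp]: "dim_row (kron A B) = dim_row A * dim_row B" "dim_col (kron A B) = dim_col A * dim_col B"
  by (simp_all add: kron_def)

lemma kron_index: "i < dim_row A * dim_row B \<Longrightarrow> j < dim_col A * dim_col B \<Longrightarrow>
  kron A B $$ (i,j) = A $$ (i div dim_row B, j div dim_col B) * B $$ (i mod dim_row B, j mod dim_col B)"
  by (simp add: kron_def)

lemma kron_one_1: "M \<in> carrier_mat a b \<Longrightarrow> kron (1\<^sub>m 1) M = M"
  by (intro eq_matI) (auto simp: kron_index)

lemma proj_dims[simp]: "dim_row (proj v) = dim_vec v" "dim_col (proj v) = dim_vec v"
  by (simp_all add: proj_def)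

lemma proj_eq: "v \<in> carrier_vec n \<Longrightarrow> proj v = mat n n (\<lambda>(i,j). v $ i * cnj (v $ j))"
  unfolding proj_def by simp

lemma ptrace2_index: "i < dA \<Longrightarrow> j < dA \<Longrightarrow> ptrace2 dA dB A $$ (i,j) = (\<Sum>k<dB. A $$ (i*dB + k, j*dB + k))"
  by (simp add: ptrace2_def)

lemma prob_kron_proj:
  assumes E: "E \<in> carrier_mat (D*dA) (D*dA)" and psi: "\<psi> \<in> carrier_vec dA" and dA: "0 < dA"
  shows "prob E (kron (mat D D (\<lambda>(i,j). \<Sum>l<L. w l i * cnj (w l j))) (proj \<psi>)) =
    Re (sform_sum E (D*dA) L (\<lambda>l I. w l (I div dA) * \<psi> $ (I mod dA)) (\<lambda>l I. w l (I div dA) * \<psi> $ (I mod dA)))"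
proof -
  define \<rho> where "\<rho> = kron (mat D D (\<lambda>(i,j). \<Sum>l<L. w l i * cnj (w l j))) (proj \<psi>)"
  define t where "t = (\<lambda>l I. w l (I div dA) * \<psi> $ (I mod dA))"
  have rC: "\<rho> \<in> carrier_mat (D*dA) (D*dA)" unfolding \<rho>_def using psi by (intro carrier_matI) simp_all
  have rho: "\<rho> $$ (J,I) = (\<Sum>l<L. t l J * cnj (t l I))" if "J < D*dA" "I < D*dA" for I J
  proof -
    have "J div dA < D" "I div dA < D" using that by (simp_all add: less_mult_imp_div_less)
    hence "\<rho> $$ (J,I) = (\<Sum>l<L. w l (J div dA) * cnj (w l (I div dA))) * (\<psi> $ (J mod dA) * cnj (\<psi> $ (I mod dA)))"
      unfolding \<rho>_def using that psi dA by (simp add: kron_index proj_def)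
    thus ?thesis unfolding t_def by (simp add: sum_distrib_left sum_distrib_right mult_ac)
  qed
  have "tr (E * \<rho>) = (\<Sum>I<D*dA. \<Sum>J<D*dA. E $$ (I,J) * \<rho> $$ (J,I))"
    unfolding tr_def using E rC by (intro sum.cong refl) (simp_all add: scalar_prod_def atLeast0LessThan)
  also have "\<dots> = (\<Sum>I<D*dA. \<Sum>J<D*dA. \<Sum>l<L. cnj (t l I) * E $$ (I,J) * t l J)"
    by (intro sum.cong refl) (simp add: rho sum_distrib_left mult_ac)
  also have "\<dots> = (\<Sum>I<D*dA. \<Sum>l<L. \<Sum>J<D*dA. cnj (t l I) * E $$ (I,J) * t l J)"
    by (rule sum.cong[OF refl], rule sum.swap)
  also have "\<dots> = sform_sum E (D*dA) L t t" unfolding sform_sum_def sform_def by (rule sum.swap)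
  finally show ?thesis unfolding prob_def \<rho>_def[symmetric] t_def by simp
qed

lemma mat_app_kron_one:
  assumes K: "K \<in> carrier_mat dR dS" and i: "i < dC * dR"
  shows "mat_app (kron (1\<^sub>m dC) K) x i = (\<Sum>s<dS. K $$ (i mod dR, s) * x ((i div dR)*dS + s))"
proof -
  have dR: "0 < dR" using i by (cases dR) auto
  have idc: "i div dR < dC" using i by (simp add: less_mult_imp_div_less)
  have "mat_app (kron (1\<^sub>m dC) K) x i = (\<Sum>c<dC. \<Sum>s<dS. kron (1\<^sub>m dC) K $$ (i,c*dS+s) * x (c*dS+s))"
    unfolding mat_app_def using K by (simp add: sum_lessThan_mult)
  also have "\<dots> = (\<Sum>c<dC. \<Sum>s<dS. (if i div dR = c then K $$ (i mod dR, s) * x (c*dS+s) else 0))"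
    using K i idc dR index_pair_less by (intro sum.cong refl) (auto simp: kron_index)
  also have "\<dots> = (\<Sum>s<dS. K $$ (i mod dR, s) * x ((i div dR)*dS + s))"
    by (subst sum.swap) (simp add: idc)
  finally show ?thesis .
qed

section \<open>Breaking a hiding commitment\<close>

locale commitment_instance =
  fixes dA dC dR :: nat and \<psi> :: "complex vec"
    and Com :: "bool \<Rightarrow> complex mat list" and Acc :: "bool \<Rightarrow> complex mat"
  assumes dA: "0 < dA" and dR: "0 < dR"
    and aux_unit: "unit_state dA \<psi>"
    and Com_kraus: "\<And>b. kraus dA (dC*dR) (Com b)"
    and Acc_povm: "\<And>b. povm_elem (dC*dR*dA) (Acc b)"
    and correct: "\<And>b. prob (Acc b) (kron (apply_ch (dC*dR) (Com b) (proj \<psi>)) (proj \<psi>)) = 1"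
begin

text \<open>The Kraus lists of both channels are padded with zeros to a common length \<open>nk\<close>; the branch
  \<open>branch b k = K\<^sub>k \<psi>\<close> of the honest commitment is then purified by the map \<open>purif b : C \<rightarrow> R \<otimes> [nk]\<close>,
  whose rows are indexed by \<open>r * nk + k\<close>.\<close>

definition nk :: nat where "nk = length (Com False) + length (Com True) + 1"
definition dS :: nat where "dS = dR * nk"
definition kraus_op :: "bool \<Rightarrow> nat \<Rightarrow> complex mat" where
  "kraus_op b k = (if k < length (Com b) then Com b ! k else 0\<^sub>m (dC*dR) dA)"
definition branch :: "bool \<Rightarrow> nat \<Rightarrow> nat \<Rightarrow> complex" where
  "branch b k = mat_app (kraus_op b k) (\<lambda>a. \<psi> $ a)"
definition purif :: "bool \<Rightarrow> complex mat" where
  "purif b = mat dS dC (\<lambda>(s,c). branch b (s mod nk) (c*dR + s div nk))"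

lemma psi: "\<psi> \<in> carrier_vec dA" and psi_norm: "(\<Sum>i<dA. cmod (\<psi> $ i)^2) = 1"
  using aux_unit by (simp_all add: unit_state_def)

lemma nk_pos: "0 < nk" and length_le_nk: "length (Com b) \<le> nk"
  unfolding nk_def by (cases b; simp)+

lemma dS_pos: "0 < dS" unfolding dS_def using dR nk_pos by simp

lemma Com_carrier: "K \<in> set (Com b) \<Longrightarrow> K \<in> carrier_mat (dC*dR) dA"
  using Com_kraus[of b] unfolding kraus_def by auto

lemma kraus_op_carrier: "kraus_op b k \<in> carrier_mat (dC*dR) dA"
  unfolding kraus_op_def using Com_carrier nth_mem by auto

lemma kraus_op_gram_sum:
  assumes "a < dA" "a' < dA"
  shows "(\<Sum>k<nk. (adj (kraus_op b k) * kraus_op b k) $$ (a,a')) = 1\<^sub>m dA $$ (a,a')"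
proof -
  have "(\<Sum>k<nk. (adj (kraus_op b k) * kraus_op b k) $$ (a,a')) =
      (\<Sum>k<length (Com b). (adj (kraus_op b k) * kraus_op b k) $$ (a,a'))"
    using assms length_le_nk by (intro sum_lessThan_zero_tail) (auto simp: kraus_op_def)
  also have "\<dots> = (\<Sum>l<length (Com b). (adj (Com b ! l) * Com b ! l) $$ (a,a'))"
    by (intro sum.cong refl) (simp add: kraus_op_def)
  finally show ?thesis using Com_kraus[of b] kraus_iff_gram_sum[of "Com b" "dC*dR" dA] Com_carrier assms by auto
qed

lemma branch_norm: "(\<Sum>k<nk. \<Sum>i<dC*dR. (cmod (branch b k i))^2) = 1"
proof -
  have "complex_of_real (\<Sum>k<nk. \<Sum>i<dC*dR. (cmod (branch b k i))^2) =
      (\<Sum>k<nk. sform (adj (kraus_op b k) * kraus_op b k) dA (\<lambda>a. \<psi> $ a) (\<lambda>a. \<psi> $ a))"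
    unfolding of_real_sum branch_def mat_app_def
    by (intro sum.cong refl) (simp add: sform_gram[OF kraus_op_carrier] carrier_matD[OF kraus_op_carrier])
  also have "\<dots> = (\<Sum>a<dA. \<Sum>a'<dA. cnj (\<psi> $ a) * (\<Sum>k<nk. (adj (kraus_op b k) * kraus_op b k) $$ (a,a')) * \<psi> $ a')"
    unfolding sform_def by (simp add: sum_distrib_left sum_distrib_right sum.swap[of _ "{..<nk}"])
  also have "\<dots> = (\<Sum>a<dA. complex_of_real ((cmod (\<psi> $ a))^2))"
    by (intro sum.cong refl) (simp add: kraus_op_gram_sum cnj_mult_self if_distrib[where f="\<lambda>x. _ * x * _"] cong: if_cong del: index_mult_mat)
  also have "\<dots> = 1" using psi_norm by (simp only: of_real_sum[symmetric]) simp
  finally show ?thesis by (simp only: of_real_eq_1_iff)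
qed

lemma purif_carrier: "purif b \<in> carrier_mat dS dC" unfolding purif_def by simp

lemma purif_index:
  assumes "r < dR" "k < nk" "c < dC"
  shows "purif b $$ (r*nk + k, c) = branch b k (c*dR + r)"
  unfolding purif_def dS_def using index_pair_less[OF assms(1,2)] assms by simp

lemma tr_purif_gram: "tr (adj (purif b) * purif b) = 1"
proof -
  have "tr (adj (purif b) * purif b) = complex_of_real (\<Sum>c<dC. \<Sum>s<dS. (cmod (purif b $$ (s,c)))^2)"
    by (rule tr_gram[OF purif_carrier])
  also have "(\<Sum>c<dC. \<Sum>s<dS. (cmod (purif b $$ (s,c)))^2) = (\<Sum>k<nk. \<Sum>c<dC. \<Sum>r<dR. (cmod (branch b k (c*dR + r)))^2)"
    unfolding dS_def sum_lessThan_mult_swap[symmetric] by (subst sum.swap) (intro sum.cong refl, simp add: purif_index)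
  also have "\<dots> = 1" using branch_norm[of b] by (simp add: sum_lessThan_mult)
  finally show ?thesis by simp
qed

lemma honest_eq:
  "apply_ch (dC*dR) (Com b) (proj \<psi>) = mat (dC*dR) (dC*dR) (\<lambda>(i,j). \<Sum>k<nk. branch b k i * cnj (branch b k j))"
proof -
  have "apply_ch (dC*dR) (Com b) (proj \<psi>) = mat (dC*dR) (dC*dR)
      (\<lambda>(i,j). \<Sum>l<length (Com b). mat_app (Com b ! l) (\<lambda>a. \<psi> $ a) i * cnj (mat_app (Com b ! l) (\<lambda>a. \<psi> $ a) j))"
    unfolding proj_eq[OF psi] by (rule apply_ch_rank_one) (use Com_carrier in blast)
  also have "\<dots> = mat (dC*dR) (dC*dR) (\<lambda>(i,j). \<Sum>k<nk. branch b k i * cnj (branch b k j))"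
  proof (rule eq_matI)
    fix i j assume "i < dim_row (mat (dC*dR) (dC*dR) (\<lambda>(i,j). \<Sum>k<nk. branch b k i * cnj (branch b k j)))"
       "j < dim_col (mat (dC*dR) (dC*dR) (\<lambda>(i,j). \<Sum>k<nk. branch b k i * cnj (branch b k j)))"
    hence ij: "i < dC*dR" "j < dC*dR" by auto
    have "(\<Sum>k<nk. branch b k i * cnj (branch b k j)) = (\<Sum>k<length (Com b). branch b k i * cnj (branch b k j))"
      using length_le_nk ij by (intro sum_lessThan_zero_tail) (auto simp: branch_def mat_app_def kraus_op_def)
    also have "\<dots> = (\<Sum>l<length (Com b). mat_app (Com b ! l) (\<lambda>a. \<psi> $ a) i * cnj (mat_app (Com b ! l) (\<lambda>a. \<psi> $ a) j))"
      by (intro sum.cong refl) (simp add: branch_def kraus_op_def)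
    finally show "mat (dC*dR) (dC*dR)
      (\<lambda>(i,j). \<Sum>l<length (Com b). mat_app (Com b ! l) (\<lambda>a. \<psi> $ a) i * cnj (mat_app (Com b ! l) (\<lambda>a. \<psi> $ a) j)) $$ (i,j)
      = mat (dC*dR) (dC*dR) (\<lambda>(i,j). \<Sum>k<nk. branch b k i * cnj (branch b k j)) $$ (i,j)" using ij by simp
  qed auto
  finally show ?thesis .
qed

lemma Acc_carrier: "Acc b \<in> carrier_mat (dC*dR*dA) (dC*dR*dA)"
  using Acc_povm[of b] unfolding povm_elem_def psd_def by auto

abbreviation tensor_aux :: "(nat \<Rightarrow> complex) \<Rightarrow> nat \<Rightarrow> complex" where
  "tensor_aux v I \<equiv> v (I div dA) * \<psi> $ (I mod dA)"

lemma honest_accept: "Re (sform_sum (Acc b) (dC*dR*dA) nk (\<lambda>k. tensor_aux (branch b k)) (\<lambda>k. tensor_aux (branch b k))) = 1"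
  using correct[of b] prob_kron_proj[OF Acc_carrier psi dA] unfolding honest_eq by simp

lemma tensor_aux_inner: "(\<Sum>I<D*dA. cnj (tensor_aux g I) * tensor_aux h I) = (\<Sum>i<D. cnj (g i) * h i)"
proof -
  have "(\<Sum>I<D*dA. cnj (tensor_aux g I) * tensor_aux h I) = (\<Sum>i<D. cnj (g i) * h i * (\<Sum>a<dA. cnj (\<psi> $ a) * \<psi> $ a))"
    by (simp add: sum_lessThan_mult sum_distrib_left mult_ac)
  also have "(\<Sum>a<dA. cnj (\<psi> $ a) * \<psi> $ a) = 1"
    using psi_norm by (simp only: cnj_mult_self of_real_sum[symmetric]) simp
  finally show ?thesis by simp
qed

text \<open>The malicious committer commits with the Stinespring isometry \<open>commit_op\<close> of \<open>Com False\<close>,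
  keeping the purifying register \<open>S = R \<otimes> [nk]\<close>; its reveal phase is a channel from \<open>S\<close> to \<open>R\<close>.\<close>

definition commit_op :: "complex mat" where
  "commit_op = mat (dC*dS) dA (\<lambda>(i,a). kraus_op False ((i mod dS) mod nk) $$ ((i div dS)*dR + (i mod dS) div nk, a))"
definition commit_vec :: "nat \<Rightarrow> complex" where
  "commit_vec i = branch False ((i mod dS) mod nk) ((i div dS)*dR + (i mod dS) div nk)"
definition attack_state :: "complex mat list \<Rightarrow> complex mat" where
  "attack_state M = apply_ch (dC*dR) (on_second dC M) (apply_ch (dC*dS) [commit_op] (proj \<psi>))"
definition reveal_vec :: "complex mat \<Rightarrow> nat \<Rightarrow> complex" where
  "reveal_vec K i = (\<Sum>s<dS. K $$ (i mod dR, s) * commit_vec ((i div dR)*dS + s))"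

lemma commit_op_carrier: "commit_op \<in> carrier_mat (dC*dS) dA" unfolding commit_op_def by simp

lemma commit_vec_eq_purif:
  assumes "c < dC" "s < dS"
  shows "commit_vec (c*dS + s) = purif False $$ (s,c)"
  unfolding commit_vec_def purif_def using assms by simp

lemma kraus_commit_op: "kraus dA (dC*dS) [commit_op]"
proof -
  have "(adj commit_op * commit_op) $$ (a,a') = 1\<^sub>m dA $$ (a,a')" if aa: "a < dA" "a' < dA" for a a'
  proof -
    define f where "f = (\<lambda>k j. cnj (kraus_op False k $$ (j,a)) * kraus_op False k $$ (j,a'))"
    have "(adj commit_op * commit_op) $$ (a,a') = (\<Sum>c<dC. \<Sum>s<dS. cnj (commit_op $$ (c*dS+s,a)) * commit_op $$ (c*dS+s,a'))"
      using aa commit_op_carrier by (simp add: scalar_prod_def atLeast0LessThan sum_lessThan_mult)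
    also have "\<dots> = (\<Sum>c<dC. \<Sum>k<nk. \<Sum>r<dR. f k (c*dR + r))"
      unfolding dS_def sum_lessThan_mult_swap[symmetric] using aa
      by (intro sum.cong refl) (simp add: commit_op_def f_def dS_def index_pair_less)
    also have "\<dots> = (\<Sum>k<nk. \<Sum>j<dC*dR. f k j)" by (subst sum.swap) (simp add: sum_lessThan_mult)
    also have "\<dots> = (\<Sum>k<nk. (adj (kraus_op False k) * kraus_op False k) $$ (a,a'))"
      unfolding f_def using aa by (intro sum.cong refl) (simp add: gram_index[OF kraus_op_carrier])
    finally show ?thesis using kraus_op_gram_sum[OF aa] by simp
  qed
  thus ?thesis using kraus_iff_gram_sum[of "[commit_op]"] commit_op_carrier by simp
qed

lemma attack_state_eq:
  assumes M: "\<forall>K\<in>set M. K \<in> carrier_mat dR dS"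
  shows "attack_state M = mat (dC*dR) (dC*dR) (\<lambda>(i,j). \<Sum>l<length M. reveal_vec (M!l) i * cnj (reveal_vec (M!l) j))"
proof -
  have "apply_ch (dC*dS) [commit_op] (proj \<psi>) = mat (dC*dS) (dC*dS)
      (\<lambda>(i,j). \<Sum>l<length [commit_op]. mat_app ([commit_op]!l) (\<lambda>a. \<psi> $ a) i * cnj (mat_app ([commit_op]!l) (\<lambda>a. \<psi> $ a) j))"
    unfolding proj_eq[OF psi] by (rule apply_ch_rank_one) (use commit_op_carrier in auto)
  also have "\<dots> = mat (dC*dS) (dC*dS) (\<lambda>(i,j). commit_vec i * cnj (commit_vec j))"
    by (intro eq_matI) (auto simp: mat_app_def commit_vec_def branch_def commit_op_def carrier_matD[OF kraus_op_carrier])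
  finally have "apply_ch (dC*dS) [commit_op] (proj \<psi>) = mat (dC*dS) (dC*dS) (\<lambda>(i,j). commit_vec i * cnj (commit_vec j))" .
  moreover have "\<forall>K\<in>set (on_second dC M). K \<in> carrier_mat (dC*dR) (dC*dS)"
    using M unfolding on_second_def by (auto intro!: carrier_matI)
  moreover have "mat_app (on_second dC M ! l) commit_vec i = reveal_vec (M!l) i" if "l < length M" "i < dC*dR" for l i
    unfolding on_second_def reveal_vec_def using that M by (auto intro!: mat_app_kron_one)
  ultimately show ?thesis unfolding attack_state_def
    by (simp add: apply_ch_rank_one) (intro eq_matI, auto simp: on_second_def)
qed

definition discard :: "nat \<Rightarrow> complex mat" where
  "discard k = mat dR dS (\<lambda>(r,s). if s = r*nk + k then 1 else 0)"

lemma discard_carrier: "discard k \<in> carrier_mat dR dS" unfolding discard_def by simp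

lemma discard_dims[simp]: "dim_row (discard k) = dR" "dim_col (discard k) = dS"
  unfolding discard_def by simp_all

lemma discard_index: "r < dR \<Longrightarrow> s < dS \<Longrightarrow> discard k $$ (r,s) = (if s = r*nk + k then 1 else 0)"
  unfolding discard_def by simp

lemma kraus_discard: "kraus dS dR (map discard [0..<nk])"
proof -
  have "(\<Sum>k<nk. (adj (discard k) * discard k) $$ (s,s')) = 1\<^sub>m dS $$ (s,s')" if ss: "s < dS" "s' < dS" for s s'
  proof -
    have "(\<Sum>k<nk. (adj (discard k) * discard k) $$ (s,s')) = (\<Sum>k<nk. \<Sum>r<dR. (\<lambda>t. if s = t \<and> s' = t then 1 else 0) (r*nk + k))"
      using ss by (intro sum.cong refl) (simp add: gram_index[OF discard_carrier] discard_index del: index_mult_mat,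
          intro sum.cong refl, simp)
    also have "\<dots> = (\<Sum>t<dR*nk. if s = t \<and> s' = t then 1 else 0)" by (rule sum_lessThan_mult_swap)
    finally show ?thesis using ss unfolding dS_def by (cases "s = s'") (auto simp: sum.delta intro!: sum.neutral)
  qed
  thus ?thesis using kraus_iff_gram_sum[of "map discard [0..<nk]" dR dS] discard_carrier by auto
qed

lemma reveal_vec_discard:
  assumes i: "i < dC*dR" and k: "k < nk"
  shows "reveal_vec (discard k) i = branch False k i"
proof -
  have idc: "i div dR < dC" using i by (simp add: less_mult_imp_div_less)
  have imr: "i mod dR < dR" using dR by simp
  have t: "(i mod dR)*nk + k < dS" using index_pair_less[OF imr k] by (simp add: dS_def)
  have "reveal_vec (discard k) i = commit_vec ((i div dR)*dS + ((i mod dR)*nk + k))"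
    unfolding reveal_vec_def using imr t by (simp add: discard_index if_distrib[where f="\<lambda>x. x * _"] sum.delta cong: if_cong)
  also have "\<dots> = branch False k ((i div dR)*dR + i mod dR)"
    by (simp add: commit_vec_eq_purif[OF idc t] purif_index[OF imr k idc])
  finally show ?thesis by simp
qed

lemma attack_state_discard: "attack_state (map discard [0..<nk]) = apply_ch (dC*dR) (Com False) (proj \<psi>)"
  unfolding honest_eq by (subst attack_state_eq) (auto simp: discard_carrier reveal_vec_discard intro!: eq_matI sum.cong)

text \<open>Revealing \<open>1\<close> applies a contraction \<open>V\<close> on \<open>S\<close> before discarding \<open>k\<close>; the operators \<open>row_op\<close>
  built from \<open>F\<^sub>1, F\<^sub>2\<close> complete this to a channel (they need \<open>dR > 0\<close>).\<close>

definition row_op :: "complex mat \<Rightarrow> nat \<Rightarrow> complex mat" where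
  "row_op F l = mat dR dS (\<lambda>(r,s). if r = 0 then F $$ (l,s) else 0)"

definition uhlmann_reveal :: "complex mat \<Rightarrow> complex mat \<Rightarrow> complex mat \<Rightarrow> complex mat list" where
  "uhlmann_reveal V F1 F2 = map (\<lambda>k. discard k * V) [0..<nk] @ map (row_op F1) [0..<dS] @ map (row_op F2) [0..<dC]"

lemma uhlmann_reveal_sum:
  "(\<Sum>l<length (uhlmann_reveal V F1 F2). f (uhlmann_reveal V F1 F2 ! l)) =
    (\<Sum>k<nk. f (discard k * V)) + ((\<Sum>l<dS. f (row_op F1 l)) + (\<Sum>l<dC. f (row_op F2 l)))"
  unfolding uhlmann_reveal_def sum_nth_append[of f] by simp

lemma row_op_carrier: "row_op F l \<in> carrier_mat dR dS" unfolding row_op_def by simp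

lemma uhlmann_reveal_carrier: "V \<in> carrier_mat dS dS \<Longrightarrow> \<forall>K\<in>set (uhlmann_reveal V F1 F2). K \<in> carrier_mat dR dS"
  unfolding uhlmann_reveal_def using discard_carrier row_op_carrier by (auto intro: mult_carrier_mat)

lemma discard_mult_index:
  assumes V: "V \<in> carrier_mat dS dS" and r: "r < dR" and s: "s < dS" and k: "k < nk"
  shows "(discard k * V) $$ (r,s) = V $$ (r*nk + k, s)"
proof -
  have "(discard k * V) $$ (r,s) = (\<Sum>t<dS. discard k $$ (r,t) * V $$ (t,s))"
    using V r s by (simp add: scalar_prod_def atLeast0LessThan)
  also have "\<dots> = (\<Sum>t<dS. if t = r*nk + k then V $$ (t,s) else 0)"
    using r by (intro sum.cong refl) (simp add: discard_index)
  also have "\<dots> = V $$ (r*nk + k, s)" using index_pair_less[OF r k] by (simp add: sum.delta dS_def)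
  finally show ?thesis .
qed

lemma row_op_gram_sum:
  assumes F: "F \<in> carrier_mat a dS" and s: "s < dS" "s' < dS"
  shows "(\<Sum>l<a. (adj (row_op F l) * row_op F l) $$ (s,s')) = (adj F * F) $$ (s,s')"
proof -
  have "(adj (row_op F l) * row_op F l) $$ (s,s') = cnj (F $$ (l,s)) * F $$ (l,s')" for l
  proof -
    have "(adj (row_op F l) * row_op F l) $$ (s,s') = (\<Sum>r<dR. cnj (row_op F l $$ (r,s)) * row_op F l $$ (r,s'))"
      using s by (rule gram_index[OF row_op_carrier])
    also have "\<dots> = (\<Sum>r<dR. if r = 0 then cnj (F $$ (l,s)) * F $$ (l,s') else 0)"
      using s by (intro sum.cong refl) (simp add: row_op_def)
    also have "\<dots> = cnj (F $$ (l,s)) * F $$ (l,s')" using dR by (simp add: sum.delta)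
    finally show ?thesis .
  qed
  thus ?thesis using F s by (simp add: gram_index del: index_mult_mat)
qed

lemma discard_mult_gram_sum:
  assumes V: "V \<in> carrier_mat dS dS" and s: "s < dS" "s' < dS"
  shows "(\<Sum>k<nk. (adj (discard k * V) * (discard k * V)) $$ (s,s')) = (adj V * V) $$ (s,s')"
proof -
  have "(\<Sum>k<nk. (adj (discard k * V) * (discard k * V)) $$ (s,s')) =
      (\<Sum>k<nk. \<Sum>r<dR. cnj ((discard k * V) $$ (r,s)) * (discard k * V) $$ (r,s'))"
    using s by (intro sum.cong refl gram_index[OF mult_carrier_mat[OF discard_carrier V]])
  also have "\<dots> = (\<Sum>k<nk. \<Sum>r<dR. (\<lambda>t. cnj (V $$ (t,s)) * V $$ (t,s')) (r*nk + k))"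
    using s V by (intro sum.cong refl) (simp add: discard_mult_index del: index_mult_mat)
  also have "\<dots> = (\<Sum>t<dR*nk. cnj (V $$ (t,s)) * V $$ (t,s'))" by (rule sum_lessThan_mult_swap)
  also have "\<dots> = (adj V * V) $$ (s,s')" using V s unfolding dS_def by (simp add: gram_index del: index_mult_mat)
  finally show ?thesis .
qed

lemma kraus_uhlmann_reveal:
  assumes V: "V \<in> carrier_mat dS dS" and F1: "F1 \<in> carrier_mat dS dS" and F2: "F2 \<in> carrier_mat dC dS"
    and complete: "adj V * V + adj F1 * F1 + adj F2 * F2 = 1\<^sub>m dS"
  shows "kraus dS dR (uhlmann_reveal V F1 F2)"
proof -
  have "(\<Sum>l<length (uhlmann_reveal V F1 F2). (adj (uhlmann_reveal V F1 F2 ! l) * uhlmann_reveal V F1 F2 ! l) $$ (s,s'))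
      = 1\<^sub>m dS $$ (s,s')" if ss: "s < dS" "s' < dS" for s s'
  proof -
    have "(\<Sum>l<length (uhlmann_reveal V F1 F2). (adj (uhlmann_reveal V F1 F2 ! l) * uhlmann_reveal V F1 F2 ! l) $$ (s,s'))
        = (adj V * V) $$ (s,s') + ((adj F1 * F1) $$ (s,s') + (adj F2 * F2) $$ (s,s'))"
      unfolding uhlmann_reveal_sum[of "\<lambda>K. (adj K * K) $$ (s,s')"]
      using discard_mult_gram_sum[OF V ss] row_op_gram_sum[OF F1 ss] row_op_gram_sum[OF F2 ss] by simp
    also have "\<dots> = (adj V * V + adj F1 * F1 + adj F2 * F2) $$ (s,s')" using V F1 F2 ss by simp
    finally show ?thesis unfolding complete .
  qed
  thus ?thesis using kraus_iff_gram_sum uhlmann_reveal_carrier[OF V] by blast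
qed

lemma reveal_vec_discard_mult:
  assumes V: "V \<in> carrier_mat dS dS" and i: "i < dC*dR" and k: "k < nk"
  shows "reveal_vec (discard k * V) i = (V * purif False) $$ ((i mod dR)*nk + k, i div dR)"
proof -
  have idc: "i div dR < dC" using i by (simp add: less_mult_imp_div_less)
  have imr: "i mod dR < dR" using dR by simp
  have t: "(i mod dR)*nk + k < dS" using index_pair_less[OF imr k] by (simp add: dS_def)
  have "reveal_vec (discard k * V) i = (\<Sum>s<dS. V $$ ((i mod dR)*nk + k, s) * purif False $$ (s, i div dR))"
    unfolding reveal_vec_def using imr idc
    by (intro sum.cong refl) (simp add: discard_mult_index[OF V] k commit_vec_eq_purif del: index_mult_mat)
  also have "\<dots> = (V * purif False) $$ ((i mod dR)*nk + k, i div dR)"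
    using V t idc purif_carrier[of False] by (simp add: scalar_prod_def atLeast0LessThan)
  finally show ?thesis .
qed

lemma branch_overlap_eq_tr:
  assumes V: "V \<in> carrier_mat dS dS"
  shows "(\<Sum>k<nk. \<Sum>i<dC*dR. cnj (branch True k i) * reveal_vec (discard k * V) i) = tr (adj (purif True) * V * purif False)"
proof -
  define f where "f = (\<lambda>s c. cnj (purif True $$ (s,c)) * (V * purif False) $$ (s,c))"
  have "(\<Sum>k<nk. \<Sum>i<dC*dR. cnj (branch True k i) * reveal_vec (discard k * V) i) = (\<Sum>k<nk. \<Sum>c<dC. \<Sum>r<dR. f (r*nk + k) c)"
    unfolding sum_lessThan_mult f_def
    by (intro sum.cong refl) (simp add: index_pair_less reveal_vec_discard_mult[OF V] purif_index)
  also have "\<dots> = (\<Sum>c<dC. \<Sum>s<dS. f s c)"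
    unfolding dS_def by (subst sum.swap) (rule sum.cong[OF refl], rule sum_lessThan_mult_swap)
  also have "\<dots> = tr (adj (purif True) * (V * purif False))"
    unfolding tr_def f_def using V purif_carrier[of True] purif_carrier[of False]
    by (intro sum.cong refl) (simp_all add: scalar_prod_def atLeast0LessThan)
  finally show ?thesis using V purif_carrier[of True] purif_carrier[of False] by (simp add: assoc_mult_mat')
qed

text \<open>Since the receiver accepts the honest commitment to \<open>1\<close> with certainty, it accepts \<open>1\<close> from the
  malicious committer with probability at least the squared overlap of the two states
  (\<open>accept_prob_ge_overlap_sq\<close>), and that overlap is \<open>tr (purif True\<^sup>* V purif False)\<close>.\<close>

lemma attack_state_uhlmann_accept:
  assumes V: "V \<in> carrier_mat dS dS"
  shows "(cmod (tr (adj (purif True) * V * purif False)))^2 \<le>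
    prob (Acc True) (kron (attack_state (uhlmann_reveal V F1 F2)) (proj \<psi>))"
proof -
  define DD where "DD = dC*dR*dA"
  define A where "A = Acc True"
  define q where "q = (\<lambda>K. sform A DD (tensor_aux (reveal_vec K)) (tensor_aux (reveal_vec K)))"
  define x where "x = (\<lambda>k. tensor_aux (branch True k))"
  define y where "y = (\<lambda>k. tensor_aux (reveal_vec (discard k * V)))"
  have q0: "0 \<le> Re (q K)" for K using Acc_povm[of True] unfolding q_def A_def DD_def povm_elem_def by (auto intro: psd_sform)
  have "prob A (kron (attack_state (uhlmann_reveal V F1 F2)) (proj \<psi>)) =
      Re (\<Sum>l<length (uhlmann_reveal V F1 F2). q (uhlmann_reveal V F1 F2 ! l))"
    unfolding attack_state_eq[OF uhlmann_reveal_carrier[OF V]] prob_kron_proj[OF Acc_carrier psi dA] sform_sum_def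
      A_def DD_def q_def ..
  also have "\<dots> = Re (sform_sum A DD nk y y) + (Re (\<Sum>l<dS. q (row_op F1 l)) + Re (\<Sum>l<dC. q (row_op F2 l)))"
    unfolding uhlmann_reveal_sum[of q] by (simp add: sform_sum_def q_def y_def)
  finally have "Re (sform_sum A DD nk y y) \<le> prob A (kron (attack_state (uhlmann_reveal V F1 F2)) (proj \<psi>))"
    using q0 by (simp add: sum_nonneg)
  moreover have "(cmod (\<Sum>k<nk. \<Sum>I<DD. cnj (x k I) * y k I))^2 \<le> Re (sform_sum A DD nk y y)"
  proof (rule accept_prob_ge_overlap_sq)
    show "povm_elem DD A" unfolding A_def DD_def by (rule Acc_povm)
    show "Re (sform_sum A DD nk x x) = 1" unfolding A_def DD_def x_def by (rule honest_accept)
    have "complex_of_real (\<Sum>k<nk. \<Sum>I<DD. (cmod (x k I))^2) =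
        complex_of_real (\<Sum>k<nk. \<Sum>i<dC*dR. (cmod (branch True k i))^2)"
      unfolding of_real_sum cnj_mult_self[symmetric] x_def DD_def tensor_aux_inner ..
    thus "(\<Sum>k<nk. \<Sum>I<DD. (cmod (x k I))^2) = 1" using branch_norm[of True] by (simp only: of_real_eq_iff)
  qed
  moreover have "(\<Sum>k<nk. \<Sum>I<DD. cnj (x k I) * y k I) = tr (adj (purif True) * V * purif False)"
    unfolding x_def y_def DD_def tensor_aux_inner by (rule branch_overlap_eq_tr[OF V])
  ultimately show ?thesis unfolding A_def by simp
qed

lemma ptrace_honest:
  assumes c: "c < dC" "c' < dC"
  shows "ptrace2 dC dR (apply_ch (dC*dR) (Com b) (proj \<psi>)) $$ (c',c) = (adj (purif b) * purif b) $$ (c,c')"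
proof -
  have "ptrace2 dC dR (apply_ch (dC*dR) (Com b) (proj \<psi>)) $$ (c',c) =
      (\<Sum>k<nk. \<Sum>r<dR. cnj (purif b $$ (r*nk + k, c)) * purif b $$ (r*nk + k, c'))"
    unfolding honest_eq using c index_pair_less[of _ dC _ dR]
    by (simp add: ptrace2_index) (subst sum.swap, intro sum.cong refl, simp add: purif_index c mult.commute)
  also have "\<dots> = (\<Sum>s<dS. cnj (purif b $$ (s, c)) * purif b $$ (s, c'))"
    unfolding dS_def by (rule sum_lessThan_mult_swap[where f="\<lambda>s. cnj (purif b $$ (s, c)) * purif b $$ (s, c')"])
  also have "\<dots> = (adj (purif b) * purif b) $$ (c,c')"
    using c by (simp add: gram_index[OF purif_carrier] del: index_mult_mat)
  finally show ?thesis .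
qed

lemma prob_ptrace_honest:
  assumes Q: "Q \<in> carrier_mat dC dC"
  shows "prob (transpose_mat Q) (kron (1\<^sub>m 1) (ptrace2 dC dR (apply_ch (dC*dR) (Com b) (proj \<psi>)))) =
     Re (tr (Q * (adj (purif b) * purif b)))"
proof -
  let ?P = "ptrace2 dC dR (apply_ch (dC*dR) (Com b) (proj \<psi>))"
  have PC: "?P \<in> carrier_mat dC dC" by (rule carrier_matI) (simp_all add: ptrace2_def)
  have MC: "adj (purif b) * purif b \<in> carrier_mat dC dC" using purif_carrier[of b] by auto
  have "tr (transpose_mat Q * ?P) = (\<Sum>c<dC. \<Sum>c'<dC. Q $$ (c',c) * ?P $$ (c',c))"
    using Q by (simp add: tr_mult[OF _ PC])
  also have "\<dots> = (\<Sum>c<dC. \<Sum>c'<dC. Q $$ (c',c) * (adj (purif b) * purif b) $$ (c,c'))"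
    by (intro sum.cong refl) (simp add: ptrace_honest del: index_mult_mat)
  also have "\<dots> = tr (Q * (adj (purif b) * purif b))"
    by (subst sum.swap) (simp add: tr_mult[OF Q MC] del: index_mult_mat)
  finally show ?thesis unfolding prob_def kron_one_1[OF PC] by simp
qed

lemma attack:
  "\<exists>dS' MCom M0 M1 D. 0 < dS' \<and> kraus dA (dC*dS') MCom \<and> kraus dS' dR M0 \<and> kraus dS' dR M1 \<and> povm_elem dC D \<and>
    prob (Acc False) (kron (apply_ch (dC*dR) (on_second dC M0) (apply_ch (dC*dS') MCom (proj \<psi>))) (proj \<psi>)) = 1 \<and>
    1 - (prob D (kron (1\<^sub>m 1) (ptrace2 dC dR (apply_ch (dC*dR) (Com False) (proj \<psi>)))) -
         prob D (kron (1\<^sub>m 1) (ptrace2 dC dR (apply_ch (dC*dR) (Com True) (proj \<psi>)))))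
      \<le> sqrt (prob (Acc True) (kron (apply_ch (dC*dR) (on_second dC M1) (apply_ch (dC*dS') MCom (proj \<psi>))) (proj \<psi>)))"
proof -
  obtain V Q F1 F2 where V: "V \<in> carrier_mat dS dS" and F: "F1 \<in> carrier_mat dS dS" "F2 \<in> carrier_mat dC dS"
    and Q: "povm_elem dC Q" and complete: "adj V * V + adj F1 * F1 + adj F2 * F2 = 1\<^sub>m dS"
    and ov: "1 - Re (tr (Q * (adj (purif False) * purif False - adj (purif True) * purif True)))
      \<le> Re (tr (adj (purif True) * V * purif False))"
    using fuchs_van_de_graaf_uhlmann[OF purif_carrier purif_carrier tr_purif_gram tr_purif_gram] by blast
  have QC: "Q \<in> carrier_mat dC dC" using Q unfolding povm_elem_def psd_def by blast
  have "povm_elem dC (transpose_mat Q)"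
  proof -
    have "1\<^sub>m dC - transpose_mat Q = transpose_mat (1\<^sub>m dC - Q)" using QC by (intro eq_matI) auto
    thus ?thesis using Q unfolding povm_elem_def by (simp add: psd_transpose)
  qed
  moreover have "prob (transpose_mat Q) (kron (1\<^sub>m 1) (ptrace2 dC dR (apply_ch (dC*dR) (Com False) (proj \<psi>)))) -
      prob (transpose_mat Q) (kron (1\<^sub>m 1) (ptrace2 dC dR (apply_ch (dC*dR) (Com True) (proj \<psi>))))
    = Re (tr (Q * (adj (purif False) * purif False - adj (purif True) * purif True)))"
    unfolding prob_ptrace_honest[OF QC] using QC purif_carrier[of False] purif_carrier[of True]
    by (simp add: mult_minus_distrib_mat' tr_minus)
  moreover have "Re (tr (adj (purif True) * V * purif False)) \<le> sqrt (prob (Acc True) (kron (attack_state (uhlmann_reveal V F1 F2)) (proj \<psi>)))"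
    using attack_state_uhlmann_accept[OF V, of F1 F2] complex_Re_le_cmod real_le_rsqrt by (metis order_trans)
  moreover have "prob (Acc False) (kron (attack_state (map discard [0..<nk])) (proj \<psi>)) = 1"
    unfolding attack_state_discard by (rule correct)
  ultimately show ?thesis
    using dS_pos kraus_commit_op kraus_discard kraus_uhlmann_reveal[OF V F complete] ov unfolding attack_state_def
    by (intro exI[of _ dS] exI[of _ "[commit_op]"] exI[of _ "map discard [0..<nk]"] exI[of _ "uhlmann_reveal V F1 F2"]
        exI[of _ "transpose_mat Q"]) auto
qed

end

definition distinguishing_adv ::
  "(nat \<Rightarrow> nat) \<Rightarrow> (nat \<Rightarrow> nat) \<Rightarrow> (nat \<Rightarrow> complex vec) \<Rightarrow> (bool \<Rightarrow> nat \<Rightarrow> complex mat list)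
    \<Rightarrow> (nat \<Rightarrow> complex mat) \<Rightarrow> nat \<Rightarrow> real" where
  "distinguishing_adv nC nR aux Com D n =
     prob (D n) (kron (1\<^sub>m 1) (ptrace2 (2 ^ nC n) (2 ^ nR n) (honest_state nC nR aux Com False n)))
     - prob (D n) (kron (1\<^sub>m 1) (ptrace2 (2 ^ nC n) (2 ^ nR n) (honest_state nC nR aux Com True n)))"

definition mal_accept ::
  "(nat \<Rightarrow> nat) \<Rightarrow> (nat \<Rightarrow> nat) \<Rightarrow> (nat \<Rightarrow> complex vec) \<Rightarrow> (bool \<Rightarrow> nat \<Rightarrow> complex mat) \<Rightarrow> (nat \<Rightarrow> nat)
    \<Rightarrow> (nat \<Rightarrow> complex mat list) \<Rightarrow> (bool \<Rightarrow> nat \<Rightarrow> complex mat list) \<Rightarrow> bool \<Rightarrow> nat \<Rightarrow> real" where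
  "mal_accept nC nR aux Acc dS MCom MRev b n =
     prob (Acc b n) (kron (mal_state nC nR aux dS MCom MRev b n) (proj (aux n)))"

lemma commitment_instance_at:
  "qaux_commitment nA nC nR aux Com Acc \<Longrightarrow>
    commitment_instance (2 ^ nA n) (2 ^ nC n) (2 ^ nR n) (aux n) (\<lambda>b. Com b n) (\<lambda>b. Acc b n)"
  unfolding qaux_commitment_def honest_state_def by unfold_locales auto

lemma scheme_attack:
  assumes "qaux_commitment nA nC nR aux Com Acc"
  shows "\<exists>dS MCom MRev D. (\<forall>n. 0 < dS n) \<and> (\<forall>n. kraus (2 ^ nA n) (2 ^ nC n * dS n) (MCom n)) \<and>
    (\<forall>b n. kraus (dS n) (2 ^ nR n) (MRev b n)) \<and> (\<forall>n. povm_elem (2 ^ nC n) (D n)) \<and>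
    (\<forall>n. mal_accept nC nR aux Acc dS MCom MRev False n = 1) \<and>
    (\<forall>n. 1 - distinguishing_adv nC nR aux Com D n \<le> sqrt (mal_accept nC nR aux Acc dS MCom MRev True n))"
proof -
  define P where "P n s G M0 M1 D \<longleftrightarrow> 0 < s \<and> kraus (2 ^ nA n) (2 ^ nC n * s) G \<and>
      kraus s (2 ^ nR n) M0 \<and> kraus s (2 ^ nR n) M1 \<and> povm_elem (2 ^ nC n) D \<and>
      prob (Acc False n) (kron (apply_ch (2 ^ nC n * 2 ^ nR n) (on_second (2 ^ nC n) M0)
        (apply_ch (2 ^ nC n * s) G (proj (aux n)))) (proj (aux n))) = 1 \<and>
      1 - distinguishing_adv nC nR aux Com (\<lambda>_. D) n \<le> sqrt (prob (Acc True n) (kron (apply_ch (2 ^ nC n * 2 ^ nR n)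
        (on_second (2 ^ nC n) M1) (apply_ch (2 ^ nC n * s) G (proj (aux n)))) (proj (aux n))))"
    for n s G M0 M1 D
  have "\<forall>n. \<exists>s G M0 M1 D. P n s G M0 M1 D"
    using commitment_instance.attack[OF commitment_instance_at[OF assms]]
    unfolding P_def distinguishing_adv_def honest_state_def by blast
  then obtain dS MCom M0 M1 D where "\<forall>n. P n (dS n) (MCom n) (M0 n) (M1 n) (D n)" by metis
  thus ?thesis unfolding P_def mal_accept_def mal_state_def distinguishing_adv_def
    by (intro exI[of _ dS] exI[of _ MCom] exI[of _ "\<lambda>b. if b then M1 else M0"] exI[of _ D]) auto
qed

lemma density_one_1: "density 1 (1\<^sub>m 1)"
  unfolding density_def psd_iff_sform sform_def by (auto simp: cnj_mult_self tr_def)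

lemma stat_hiding_distinguishing_adv_negl:
  assumes hiding: "stat_hiding nA nC nR aux Com" and D: "\<forall>n. povm_elem (2 ^ nC n) (D n)"
  shows "negl (distinguishing_adv nC nR aux Com D)"
proof -
  have "polybounded (\<lambda>_. 0)" unfolding polybounded_def by auto
  moreover have "\<forall>n. density (2 ^ 0) (1\<^sub>m 1)" using density_one_1 by simp
  moreover have "\<forall>n. povm_elem (2 ^ 0 * 2 ^ nC n) (D n)" using D by simp
  ultimately show ?thesis
    using hiding[unfolded stat_hiding_def, rule_format, of "\<lambda>_. 0" "\<lambda>_. 1\<^sub>m 1" D]
    unfolding distinguishing_adv_def[abs_def] by blast
qed

lemma stat_sum_binding_mal_accept_negl:
  assumes binding: "stat_sum_binding nA nC nR aux Acc" and "\<forall>n. 0 < dS n"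
    and "\<forall>n. kraus (2 ^ nA n) (2 ^ nC n * dS n) (MCom n)" "\<forall>b n. kraus (dS n) (2 ^ nR n) (MRev b n)"
    and accept0: "\<forall>n. mal_accept nC nR aux Acc dS MCom MRev False n = 1"
  shows "\<exists>\<epsilon>. negl \<epsilon> \<and> (\<forall>n. mal_accept nC nR aux Acc dS MCom MRev True n \<le> \<epsilon> n)"
proof -
  obtain \<epsilon> where "negl \<epsilon>"
    and "\<forall>n. mal_accept nC nR aux Acc dS MCom MRev False n + mal_accept nC nR aux Acc dS MCom MRev True n \<le> 1 + \<epsilon> n"
    using binding[unfolded stat_sum_binding_def, rule_format, of dS MCom MRev] assms(2-4)
    unfolding mal_accept_def by blast
  thus ?thesis using accept0 by auto
qed

text \<open>Negligible functions are eventually below \<open>1/4\<close>, and \<open>1 - 1/4 > \<surd>(1/4)\<close>.\<close>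

lemma negl_one_minus_le_sqrt_negl:
  assumes "negl \<delta>" "negl \<epsilon>" "\<forall>n. 1 - \<delta> n \<le> sqrt (\<epsilon> n)"
  shows False
proof -
  have "eventually (\<lambda>n. \<bar>\<delta> n\<bar> \<le> 1 / real n ^ 1) sequentially" "eventually (\<lambda>n. \<bar>\<epsilon> n\<bar> \<le> 1 / real n ^ 1) sequentially"
    using assms(1,2) unfolding negl_def by blast+
  then obtain n where n: "\<bar>\<delta> n\<bar> \<le> 1 / real n" "\<bar>\<epsilon> n\<bar> \<le> 1 / real n" "4 \<le> n"
    using eventually_happens[OF eventually_conj[OF _ eventually_conj[OF _ eventually_ge_at_top]]] by fastforce
  have q: "1 / real n \<le> (1 / 2)^2" using n(3) by (simp add: field_simps)
  hence "sqrt (\<epsilon> n) \<le> sqrt ((1 / 2)^2)" using n(2) by (intro real_sqrt_le_mono) linarith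
  hence "sqrt (\<epsilon> n) \<le> 1 / 2" by simp
  moreover have "1 / real n \<le> 1 / 4" using q by (simp add: power2_eq_square)
  ultimately show False using assms(3)[rule_format, of n] n(1) by linarith
qed

theorem theorem5p10:
  shows "\<not> (\<exists>nA nC nR aux Com Acc.
            qaux_commitment nA nC nR aux Com Acc \<and>
            stat_hiding nA nC nR aux Com \<and>
            stat_sum_binding nA nC nR aux Acc)"
proof
  assume "\<exists>nA nC nR aux Com Acc. qaux_commitment nA nC nR aux Com Acc \<and>
    stat_hiding nA nC nR aux Com \<and> stat_sum_binding nA nC nR aux Acc"
  then obtain nA nC nR aux Com Acc where scheme: "qaux_commitment nA nC nR aux Com Acc"
    and hiding: "stat_hiding nA nC nR aux Com" and binding: "stat_sum_binding nA nC nR aux Acc" by blast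
  obtain dS MCom MRev D where attack: "\<forall>n. 0 < dS n" "\<forall>n. kraus (2 ^ nA n) (2 ^ nC n * dS n) (MCom n)"
    "\<forall>b n. kraus (dS n) (2 ^ nR n) (MRev b n)" "\<forall>n. povm_elem (2 ^ nC n) (D n)"
    "\<forall>n. mal_accept nC nR aux Acc dS MCom MRev False n = 1"
    "\<forall>n. 1 - distinguishing_adv nC nR aux Com D n \<le> sqrt (mal_accept nC nR aux Acc dS MCom MRev True n)"
    using scheme_attack[OF scheme] by blast
  obtain \<epsilon> where "negl \<epsilon>" and "\<forall>n. mal_accept nC nR aux Acc dS MCom MRev True n \<le> \<epsilon> n"
    using stat_sum_binding_mal_accept_negl[OF binding attack(1-3,5)] by blast
  hence "\<forall>n. 1 - distinguishing_adv nC nR aux Com D n \<le> sqrt (\<epsilon> n)"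
    using attack(6) real_sqrt_le_mono order_trans by blast
  thus False
    using negl_one_minus_le_sqrt_negl stat_hiding_distinguishing_adv_negl[OF hiding attack(4)] \<open>negl \<epsilon>\<close> by blast
qed

end
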